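(* Let $n\ge3$, let $a_1,\dots,a_{n-1}$ be pairwise distinct integers, and for integers $a\notin\{a_1,\dots,a_{n-1}\}$ let $K_a=\mathbb Q(\xi)$, where $\xi$ is a root of $f_a(x)=(x-a_1)\cdots(x-a_{n-1})(x-a)-1$. There is $A_1$ depending only on $a_1,\dots,a_{n-1}$ such that for every integer $A\ge A_1$ the following holds: if $S$ is a set of integers $a$ with $A\le|a|\le2A$ such that all fields $K_a$, $a\in S$, are isomorphic to one and the same field, then $|S|\le n(n-1)(n-2)$.
   Context: The polynomial $f_a$ is irreducible over $\mathbb Q$, so the isomorphism class of $K_a$ does not depend on the choice of the root $\xi$. *)

theory Defs
  imports "HOL-Computational_Algebra.Polynomial" Complex_Main
begin

definition f_poly :: "nat \<Rightarrow> (nat \<Rightarrow> int) \<Rightarrow> int \<Rightarrow> int poly" where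
  "f_poly n a c = (\<Prod>i<n-1. [:- a i, 1:]) * [:- c, 1:] - 1"

definition gen_field :: "complex \<Rightarrow> complex set" where
  "gen_field \<xi> = \<Inter>{F. \<xi> \<in> F \<and> 0 \<in> F \<and> 1 \<in> F \<and>
      (\<forall>x\<in>F. \<forall>y\<in>F. x + y \<in> F \<and> x * y \<in> F) \<and> (\<forall>x\<in>F. - x \<in> F) \<and>
      (\<forall>x\<in>F. x \<noteq> 0 \<longrightarrow> inverse x \<in> F)}"

definition fields_iso :: "complex set \<Rightarrow> complex set \<Rightarrow> bool" where
  "fields_iso F G \<longleftrightarrow> (\<exists>\<phi>. bij_betw \<phi> F G \<and> \<phi> 1 = 1 \<and>
      (\<forall>x\<in>F. \<forall>y\<in>F. \<phi> (x + y) = \<phi> x + \<phi> y \<and> \<phi> (x * y) = \<phi> x * \<phi> y))"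

end

theory Submission
  imports Defs "Jordan_Normal_Form.Char_Poly" "HOL-Computational_Algebra.Field_as_Ring"
begin

text \<open>Write \<open>M\<close> for the sum of the \<open>|a\<^sub>i|\<close>. When \<open>|c|\<close> is large compared with \<open>M\<close>, every
  root of \<open>f\<^sub>c\<close> lies within \<open>2\<^sup>n\<^sup>-\<^sup>1/|c|\<close> of a node \<open>a\<^sub>i\<close>, except for at most one root very
  close to \<open>c\<close>, and distinct roots are close to distinct nodes.

  The polynomial \<open>f\<^sub>c\<close> is irreducible over \<open>\<rat>\<close>, so an isomorphism \<open>K\<^sub>c \<cong> K\<^sub>b\<close> yields a
  rational polynomial \<open>E\<^sub>c\<close> such that \<open>E\<^sub>c(\<theta>\<^sub>1), \<dots>, E\<^sub>c(\<theta>\<^sub>n)\<close> are the roots of \<open>f\<^sub>c\<close>, where the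
  \<open>\<theta>\<^sub>k\<close> are the roots of \<open>f\<^sub>b\<close>. For \<open>c \<noteq> c'\<close> in \<open>S\<close> the product
  \<open>\<Prod>\<^sub>k (E\<^sub>c(\<theta>\<^sub>k) - E\<^sub>c\<^sub>'(\<theta>\<^sub>k))\<close> is a norm, hence a rational algebraic integer, and it is
  nonzero because \<open>f\<^sub>c\<close> and \<open>f\<^sub>c\<^sub>'\<close> have no common root.

  Attach to \<open>c\<close> the index of the root near \<open>c\<close> and the nodes near the roots with two
  further indices; there are \<open>n(n-1)(n-2)\<close> such signatures. If \<open>c \<noteq> c'\<close> had the same signature,
  the product above would have two factors of size \<open>O(2\<^sup>n/A)\<close>, one of size \<open>O(A)\<close> and the
  remaining ones bounded in terms of \<open>M\<close>, so its absolute value would be less than \<open>1\<close>.\<close>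

section \<open>Algebraic integers form a ring\<close>

text \<open>For \<open>w \<noteq> 0\<close> this says that \<open>x\<close> is an eigenvalue of an integer matrix, which characterises
  algebraic integers; tensor products of such vectors give a common one for two algebraic
  integers.\<close>
definition int_eigenvalue_on :: "nat \<Rightarrow> (nat \<Rightarrow> 'a::comm_ring_1) \<Rightarrow> 'a \<Rightarrow> bool" where
  "int_eigenvalue_on m w x \<longleftrightarrow>
     (\<exists>A :: nat \<Rightarrow> nat \<Rightarrow> int. \<forall>i<m. x * w i = (\<Sum>j<m. of_int (A i j) * w j))"

lemma int_eigenvalue_onI:
  "(\<And>i. i < m \<Longrightarrow> x * w i = (\<Sum>j<m. of_int (A i j) * w j)) \<Longrightarrow> int_eigenvalue_on m w x"
  unfolding int_eigenvalue_on_def by blast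

lemma int_eigenvalue_on_imp_algebraic_int:
  fixes x :: "'a::field_char_0"
  assumes nz: "\<exists>i<m. w i \<noteq> 0" and "int_eigenvalue_on m w x"
  shows "algebraic_int x"
proof -
  obtain A :: "nat \<Rightarrow> nat \<Rightarrow> int" where eq: "\<And>i. i < m \<Longrightarrow> x * w i = (\<Sum>j<m. of_int (A i j) * w j)"
    using assms(2) unfolding int_eigenvalue_on_def by blast
  define B :: "int mat" where "B = mat m m (\<lambda>(i,j). A i j)"
  define Bx :: "'a mat" where "Bx = of_int_hom.mat_hom B"
  define v where "v = vec m w"
  have B: "B \<in> carrier_mat m m" and Bx: "Bx \<in> carrier_mat m m"
    unfolding Bx_def B_def by auto
  have "Bx *\<^sub>v v = x \<cdot>\<^sub>v v"
  proof (rule eq_vecI)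
    fix i assume "i < dim_vec (x \<cdot>\<^sub>v v)"
    hence i: "i < m" unfolding v_def by auto
    have "(Bx *\<^sub>v v) $ i = (\<Sum>j<m. of_int (A i j) * w j)"
      using i unfolding Bx_def B_def v_def
      by (auto simp: scalar_prod_def lessThan_atLeast0 intro!: sum.cong)
    also have "\<dots> = x * w i" using eq[OF i] by simp
    finally show "(Bx *\<^sub>v v) $ i = (x \<cdot>\<^sub>v v) $ i" using i unfolding v_def by simp
  qed (auto simp: Bx_def B_def v_def)
  moreover have "v \<noteq> 0\<^sub>v m"
    using nz unfolding v_def by (metis index_vec index_zero_vec(1))
  moreover have "v \<in> carrier_vec m" unfolding v_def by simp
  ultimately have "eigenvalue Bx x"
    unfolding eigenvalue_def eigenvector_def using Bx by blast
  hence "poly (of_int_poly (char_poly B)) x = 0"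
    using eigenvalue_root_char_poly[OF Bx] unfolding Bx_def of_int_hom.char_poly_hom[OF B] by simp
  moreover have "lead_coeff (char_poly B) = 1" using degree_monic_char_poly[OF B] by simp
  ultimately show ?thesis unfolding algebraic_int_altdef_ipoly by blast
qed

text \<open>The eigenvector consists of the powers \<open>1, x, \<dots>, x\<^sup>m\<^sup>-\<^sup>1\<close>; the matrix is the
  companion matrix of a monic integer polynomial of \<open>x\<close>.\<close>
lemma algebraic_int_imp_int_eigenvalue_on:
  fixes x :: "'a::field_char_0"
  assumes "algebraic_int x"
  obtains m w where "\<exists>i<m. w i \<noteq> 0" "int_eigenvalue_on m w x"
proof -
  obtain p where p0: "poly (of_int_poly p) x = 0" and p1: "lead_coeff p = 1"
    using assms unfolding algebraic_int_altdef_ipoly by blast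
  define m where "m = degree p"
  have "m \<noteq> 0"
  proof
    assume "m = 0"
    then have "p = 1" using p1 unfolding m_def by (metis degree_0_id one_pCons)
    with p0 show False by simp
  qed
  define w where "w = (\<lambda>i::nat. x ^ i)"
  define A where "A = (\<lambda>i j::nat. if i + 1 < m then (if j = i + 1 then 1 else 0) else - coeff p j)"
  have "int_eigenvalue_on m w x"
  proof (rule int_eigenvalue_onI)
    fix i assume i: "i < m"
    show "x * w i = (\<Sum>j<m. of_int (A i j) * w j)"
    proof (cases "i + 1 < m")
      case True
      then have "(\<Sum>j<m. of_int (A i j) * w j) = (\<Sum>j<m. if j = i + 1 then w j else 0)"
        unfolding A_def by (intro sum.cong) auto
      then show ?thesis using True unfolding w_def by simp
    next
      case False
      then have im: "Suc i = m" using i by simp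
      have "0 = (\<Sum>j\<le>m. of_int (coeff p j) * x ^ j)"
        using p0 unfolding poly_altdef m_def by (simp add: coeff_map_poly degree_map_poly)
      also have "\<dots> = (\<Sum>j<m. of_int (coeff p j) * x ^ j) + x ^ m"
        using p1 unfolding m_def by (simp add: lessThan_Suc_atMost[symmetric])
      finally have "x ^ m = - (\<Sum>j<m. of_int (coeff p j) * x ^ j)"
        by (simp add: eq_neg_iff_add_eq_0 add.commute)
      then show ?thesis
        using False im unfolding A_def w_def by (simp add: sum_negf flip: power_Suc)
    qed
  qed
  moreover have "w 0 \<noteq> 0" unfolding w_def by simp
  ultimately show ?thesis using that \<open>m \<noteq> 0\<close> by blast
qed

lemma sum_lessThan_mult_split:
  fixes f :: "nat \<Rightarrow> 'a::comm_monoid_add"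
  shows "(\<Sum>k<m * l. f k) = (\<Sum>i<m. \<Sum>j<l. f (i * l + j))"
proof -
  have "(\<Sum>k<m * l. f k) = (\<Sum>i<m. sum f {i * l..<i * l + l})"
    by (rule sum.nat_group[symmetric])
  also have "\<dots> = (\<Sum>i<m. \<Sum>j<l. f (i * l + j))"
  proof (rule sum.cong[OF refl])
    fix i
    show "sum f {i * l..<i * l + l} = (\<Sum>j<l. f (i * l + j))"
      using sum.shift_bounds_nat_ivl[of f 0 "i * l" l] by (simp add: lessThan_atLeast0 add.commute)
  qed
  finally show ?thesis .
qed

context
  fixes m l :: nat and v u :: "nat \<Rightarrow> 'a::comm_ring_1"
  assumes l: "l > 0"
begin

private lemma sum_tensor:
  "(\<Sum>k'<m * l. g (k' div l) (k' mod l) * (v (k' div l) * u (k' mod l)))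
     = (\<Sum>i<m. \<Sum>j<l. g i j * v i * u j)"
  using l by (subst sum_lessThan_mult_split) (simp_all add: mult.assoc)

lemma int_eigenvalue_on_tensor_left:
  assumes "int_eigenvalue_on m v x"
  shows "int_eigenvalue_on (m * l) (\<lambda>k. v (k div l) * u (k mod l)) x"
proof -
  obtain A :: "nat \<Rightarrow> nat \<Rightarrow> int" where A: "\<And>i. i < m \<Longrightarrow> x * v i = (\<Sum>j<m. of_int (A i j) * v j)"
    using assms unfolding int_eigenvalue_on_def by blast
  show ?thesis
  proof (rule int_eigenvalue_onI
      [where A = "\<lambda>k k'. if k mod l = k' mod l then A (k div l) (k' div l) else 0"])
    fix k assume k: "k < m * l"
    then have "k div l < m" "k mod l < l" using l by (auto simp: less_mult_imp_div_less)
    then have "(\<Sum>k'<m * l. of_int (if k mod l = k' mod l then A (k div l) (k' div l) else 0)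
          * (v (k' div l) * u (k' mod l)))
        = (\<Sum>i<m. \<Sum>j<l. (if k mod l = j then of_int (A (k div l) i) * v i * u j else 0))"
      by (subst sum_tensor) (intro sum.cong refl, simp)
    also have "\<dots> = (\<Sum>i<m. of_int (A (k div l) i) * v i) * u (k mod l)"
      using \<open>k mod l < l\<close> by (simp add: sum_distrib_right)
    also have "\<dots> = x * v (k div l) * u (k mod l)"
      using A[OF \<open>k div l < m\<close>] by simp
    finally show "x * (v (k div l) * u (k mod l)) = (\<Sum>k'<m * l.
        of_int (if k mod l = k' mod l then A (k div l) (k' div l) else 0) * (v (k' div l) * u (k' mod l)))"
      by (simp add: mult.assoc)
  qed
qed

lemma int_eigenvalue_on_tensor_right:
  assumes "int_eigenvalue_on l u y"
  shows "int_eigenvalue_on (m * l) (\<lambda>k. v (k div l) * u (k mod l)) y"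
proof -
  obtain B :: "nat \<Rightarrow> nat \<Rightarrow> int" where B: "\<And>i. i < l \<Longrightarrow> y * u i = (\<Sum>j<l. of_int (B i j) * u j)"
    using assms unfolding int_eigenvalue_on_def by blast
  show ?thesis
  proof (rule int_eigenvalue_onI
      [where A = "\<lambda>k k'. if k div l = k' div l then B (k mod l) (k' mod l) else 0"])
    fix k assume k: "k < m * l"
    then have "k div l < m" "k mod l < l" using l by (auto simp: less_mult_imp_div_less)
    then have "(\<Sum>k'<m * l. of_int (if k div l = k' div l then B (k mod l) (k' mod l) else 0)
          * (v (k' div l) * u (k' mod l)))
        = (\<Sum>i<m. if k div l = i then (\<Sum>j<l. of_int (B (k mod l) j) * v i * u j) else 0)"
      by (subst sum_tensor) (intro sum.cong refl, simp)
    also have "\<dots> = v (k div l) * (\<Sum>j<l. of_int (B (k mod l) j) * u j)"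
      using \<open>k div l < m\<close> by (simp add: sum_distrib_left mult_ac)
    also have "\<dots> = v (k div l) * (y * u (k mod l))"
      using B[OF \<open>k mod l < l\<close>] by simp
    finally show "y * (v (k div l) * u (k mod l)) = (\<Sum>k'<m * l.
        of_int (if k div l = k' div l then B (k mod l) (k' mod l) else 0) * (v (k' div l) * u (k' mod l)))"
      by (simp add: mult.left_commute)
  qed
qed

end

lemma int_eigenvalue_on_diff:
  assumes "int_eigenvalue_on m w x" "int_eigenvalue_on m w y"
  shows "int_eigenvalue_on m w (x - y)"
proof -
  obtain A B :: "nat \<Rightarrow> nat \<Rightarrow> int"
    where "\<And>i. i < m \<Longrightarrow> x * w i = (\<Sum>j<m. of_int (A i j) * w j)"
      and "\<And>i. i < m \<Longrightarrow> y * w i = (\<Sum>j<m. of_int (B i j) * w j)"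
    using assms unfolding int_eigenvalue_on_def by metis
  then show ?thesis
    by (intro int_eigenvalue_onI[where A = "\<lambda>i j. A i j - B i j"])
       (simp add: left_diff_distrib sum_subtractf)
qed

lemma int_eigenvalue_on_mult:
  assumes "int_eigenvalue_on m w x" "int_eigenvalue_on m w y"
  shows "int_eigenvalue_on m w (x * y)"
proof -
  obtain A B :: "nat \<Rightarrow> nat \<Rightarrow> int"
    where A: "\<And>i. i < m \<Longrightarrow> x * w i = (\<Sum>j<m. of_int (A i j) * w j)"
      and B: "\<And>i. i < m \<Longrightarrow> y * w i = (\<Sum>j<m. of_int (B i j) * w j)"
    using assms unfolding int_eigenvalue_on_def by metis
  show ?thesis
  proof (rule int_eigenvalue_onI[where A = "\<lambda>i k. \<Sum>j<m. B i j * A j k"])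
    fix i assume "i < m"
    have "x * y * w i = x * (\<Sum>j<m. of_int (B i j) * w j)"
      using B[OF \<open>i < m\<close>] by (simp add: mult.assoc)
    also have "\<dots> = (\<Sum>j<m. of_int (B i j) * (x * w j))"
      by (simp add: sum_distrib_left mult.left_commute)
    also have "\<dots> = (\<Sum>j<m. \<Sum>k<m. of_int (B i j) * of_int (A j k) * w k)"
      using A by (simp add: sum_distrib_left mult_ac)
    also have "\<dots> = (\<Sum>k<m. of_int (\<Sum>j<m. B i j * A j k) * w k)"
      by (subst sum.swap) (simp add: sum_distrib_right)
    finally show "x * y * w i = (\<Sum>k<m. of_int (\<Sum>j<m. B i j * A j k) * w k)" .
  qed
qed

lemma algebraic_int_common_eigenvector:
  fixes x y :: "'a::field_char_0"
  assumes "algebraic_int x" "algebraic_int y"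
  obtains m w where "\<exists>i<m. w i \<noteq> 0" "int_eigenvalue_on m w x" "int_eigenvalue_on m w y"
proof -
  obtain m v where v: "\<exists>i<m. v i \<noteq> 0" "int_eigenvalue_on m v x"
    using assms(1) by (rule algebraic_int_imp_int_eigenvalue_on)
  obtain l u where u: "\<exists>j<l. u j \<noteq> 0" "int_eigenvalue_on l u y"
    using assms(2) by (rule algebraic_int_imp_int_eigenvalue_on)
  then have "l > 0" by auto
  from v(1) u(1) obtain i j where ij: "i < m" "v i \<noteq> 0" "j < l" "u j \<noteq> 0" by blast
  have "i * l + j < m * l"
  proof -
    have "i * l + j < Suc i * l" using ij by simp
    also have "\<dots> \<le> m * l" using ij by (intro mult_right_mono) auto
    finally show ?thesis .
  qed
  then have "\<exists>k<m * l. v (k div l) * u (k mod l) \<noteq> 0"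
    using ij by (intro exI[of _ "i * l + j"]) simp
  then show ?thesis
    by (rule that[OF _ int_eigenvalue_on_tensor_left[OF \<open>l > 0\<close> v(2)]
          int_eigenvalue_on_tensor_right[OF \<open>l > 0\<close> u(2)]])
qed

lemma algebraic_int_diff:
  fixes x y :: "'a::field_char_0"
  assumes "algebraic_int x" "algebraic_int y"
  shows "algebraic_int (x - y)"
proof -
  obtain m w where "\<exists>i<m. w i \<noteq> 0" "int_eigenvalue_on m w x" "int_eigenvalue_on m w y"
    using assms by (rule algebraic_int_common_eigenvector)
  then show ?thesis by (blast intro: int_eigenvalue_on_imp_algebraic_int int_eigenvalue_on_diff)
qed

lemma algebraic_int_times:
  fixes x y :: "'a::field_char_0"
  assumes "algebraic_int x" "algebraic_int y"
  shows "algebraic_int (x * y)"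
proof -
  obtain m w where "\<exists>i<m. w i \<noteq> 0" "int_eigenvalue_on m w x" "int_eigenvalue_on m w y"
    using assms by (rule algebraic_int_common_eigenvector)
  then show ?thesis by (blast intro: int_eigenvalue_on_imp_algebraic_int int_eigenvalue_on_mult)
qed

lemma algebraic_int_plus:
  fixes x y :: "'a::field_char_0"
  shows "algebraic_int x \<Longrightarrow> algebraic_int y \<Longrightarrow> algebraic_int (x + y)"
  using algebraic_int_diff[of x "- y"] by simp

lemma algebraic_int_prod:
  fixes f :: "'b \<Rightarrow> 'a::field_char_0"
  shows "(\<And>i. i \<in> I \<Longrightarrow> algebraic_int (f i)) \<Longrightarrow> algebraic_int (prod f I)"
  by (induction I rule: infinite_finite_induct) (auto intro: algebraic_int_times)

lemma algebraic_int_coeff_prod_linear: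
  fixes zs :: "'a::field_char_0 list"
  assumes "\<forall>z\<in>set zs. algebraic_int z"
  shows "algebraic_int (coeff (\<Prod>z\<leftarrow>zs. [:- z, 1:]) i)"
  using assms
proof (induction zs arbitrary: i)
  case Nil
  then show ?case by (cases i) auto
next
  case (Cons z zs)
  have "(\<Prod>z\<leftarrow>z # zs. [:- z, 1:])
      = Polynomial.smult (- z) (\<Prod>z\<leftarrow>zs. [:- z, 1:]) + pCons 0 (\<Prod>z\<leftarrow>zs. [:- z, 1:])"
    by simp
  with Cons show ?case
    by (cases i) (auto intro!: algebraic_int_plus algebraic_int_times algebraic_int_diff)
qed

section \<open>The polynomials \<open>f\<^sub>c\<close>\<close>

lemma Ints_mult_eq_minus_one_imp_add_eq_0:
  fixes x y :: "'a::ring_char_0"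
  assumes "x \<in> \<int>" "y \<in> \<int>" "x * y = -1"
  shows "x + y = 0"
proof -
  obtain i j where ij: "x = of_int i" "y = of_int j" using assms(1,2) by (auto elim!: Ints_cases)
  with assms(3) have "of_int (i * j) = (of_int (- 1) :: 'a)" by simp
  then have "i * (- j) = 1" unfolding of_int_eq_iff by simp
  then have "i = 1 \<and> - j = 1 \<or> i = -1 \<and> - j = -1" by (simp only: zmult_eq_1_iff)
  then show ?thesis using ij by auto
qed

lemma poly_in_Ints:
  fixes p :: "'a::comm_ring_1 poly"
  shows "(\<And>i. coeff p i \<in> \<int>) \<Longrightarrow> t \<in> \<int> \<Longrightarrow> poly p t \<in> \<int>"
  unfolding poly_altdef by (intro Ints_sum Ints_mult Ints_power) auto

lemma of_int_poly_f_poly: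
  "(of_int_poly (f_poly n a c) :: 'a::comm_ring_1 poly)
     = (\<Prod>i<n-1. [:- of_int (a i), 1:]) * [:- of_int c, 1:] - 1"
proof -
  have linear: "of_int_poly [:x, y:] = ([:of_int x, of_int y:] :: 'a poly)" for x y :: int
    by (rule poly_eqI) (simp add: coeff_map_poly coeff_pCons split: nat.split)
  show ?thesis unfolding f_poly_def
    by (simp only: of_int_poly_hom.hom_prod of_int_poly_hom.hom_mult of_int_poly_hom.hom_minus linear
        of_int_minus of_int_1 of_int_poly_hom.hom_one)
qed

lemma poly_f_poly:
  "poly (of_int_poly (f_poly n a c) :: 'a::comm_ring_1 poly) x
     = (\<Prod>i<n-1. (x - of_int (a i))) * (x - of_int c) - 1"
  unfolding of_int_poly_f_poly by (simp add: poly_prod algebra_simps)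

lemma
  assumes "n \<ge> 1"
  shows degree_f_poly: "degree (f_poly n a c) = n"
    and lead_coeff_f_poly: "lead_coeff (f_poly n a c) = 1"
proof -
  define P :: "int poly" where "P = (\<Prod>i<n-1. [:- a i, 1:]) * [:- c, 1:]"
  have monic: "monic (\<Prod>i<n-1. [:- a i, 1:])" by (rule monic_prod) simp
  have "degree (\<Prod>i<n-1. [:- a i, 1:]) = n - 1"
    by (subst degree_prod_eq_sum_degree) auto
  then have P: "degree P = n" using monic assms unfolding P_def by (subst degree_mult_eq) auto
  have "lead_coeff P = lead_coeff (\<Prod>i<n-1. [:- a i, 1:]) * lead_coeff [:- c, 1:]"
    unfolding P_def by (rule lead_coeff_mult)
  with monic have "lead_coeff P = 1" by simp
  moreover have "f_poly n a c = P + (- 1)" unfolding f_poly_def P_def by simp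
  moreover have "degree (P + (- 1)) = n" using P assms by (subst degree_add_eq_left) auto
  ultimately show "degree (f_poly n a c) = n" "lead_coeff (f_poly n a c) = 1"
    using P assms by simp_all
qed

lemma poly_f_poly_node:
  assumes "t \<in> insert c (a ` {..<n-1})"
  shows "poly (of_int_poly (f_poly n a c) :: 'a::comm_ring_1 poly) (of_int t) = -1"
proof -
  have "(\<Prod>i<n-1. (of_int t - of_int (a i) :: 'a)) * (of_int t - of_int c) = 0"
  proof (cases "t = c")
    case False
    then obtain i where "i < n - 1" "t = a i" using assms by auto
    then have "(\<Prod>i<n-1. (of_int t - of_int (a i) :: 'a)) = 0" by (intro prod_zero) auto
    then show ?thesis by simp
  qed simp
  then show ?thesis unfolding poly_f_poly by simp
qed

lemma algebraic_int_f_poly_root: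
  fixes z :: "'a::field_char_0"
  assumes "n \<ge> 1" "poly (of_int_poly (f_poly n a c)) z = 0"
  shows "algebraic_int z"
  using assms lead_coeff_f_poly[OF assms(1)] degree_f_poly[OF assms(1)]
  unfolding algebraic_int_altdef_ipoly by blast

lemma f_poly_no_common_root:
  fixes z :: "'a::{idom,ring_char_0}"
  assumes "poly (of_int_poly (f_poly n a c)) z = 0" "c \<noteq> c'"
  shows "poly (of_int_poly (f_poly n a c')) z \<noteq> 0"
proof
  define g where "g = (\<Prod>i<n-1. (z - of_int (a i)))"
  assume "poly (of_int_poly (f_poly n a c')) z = 0"
  with assms(1) have "g * (z - of_int c) = 1" "g * (z - of_int c') = 1"
    unfolding poly_f_poly g_def by simp_all
  then have "g * (of_int c' - of_int c) = g * (z - of_int c) - g * (z - of_int c')"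
    by (simp add: algebra_simps)
  also have "\<dots> = 0" using \<open>g * (z - of_int c) = 1\<close> \<open>g * (z - of_int c') = 1\<close> by simp
  finally have "g * (of_int c' - of_int c) = 0" .
  moreover have "of_int c' - of_int c \<noteq> (0 :: 'a)" using assms(2) by simp
  ultimately have "g = 0" by simp
  with \<open>g * (z - of_int c) = 1\<close> show False by simp
qed

section \<open>Irreducibility of \<open>f\<^sub>c\<close> over \<open>\<rat>\<close>\<close>

interpretation of_rat_poly_hom: map_poly_idom_hom of_rat ..

definition rpoly :: "rat poly \<Rightarrow> 'a::field_char_0 \<Rightarrow> 'a" where
  "rpoly p x = poly (map_poly of_rat p) x"

lemma rpoly_add [simp]: "rpoly (p + q) x = rpoly p x + rpoly q x"
  and rpoly_mult [simp]: "rpoly (p * q) x = rpoly p x * rpoly q x"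
  and rpoly_diff [simp]: "rpoly (p - q) x = rpoly p x - rpoly q x"
  and rpoly_minus [simp]: "rpoly (- p) x = - rpoly p x"
  and rpoly_0 [simp]: "rpoly 0 x = 0"
  and rpoly_1 [simp]: "rpoly 1 x = 1"
  and rpoly_X [simp]: "rpoly [:0, 1:] x = x"
  and rpoly_pCons: "rpoly (pCons c p) x = of_rat c + x * rpoly p x"
  and rpoly_pcompose: "rpoly (p \<circ>\<^sub>p q) x = rpoly p (rpoly q x)"
  by (simp_all add: rpoly_def of_rat_poly_hom.hom_add of_rat_poly_hom.hom_mult of_rat_poly_hom.hom_minus
      of_rat_poly_hom.hom_uminus of_rat_hom.map_poly_pCons_hom of_rat_hom.map_poly_pcompose poly_pcompose)

lemma rpoly_of_int_poly: "rpoly (of_int_poly p) x = poly (of_int_poly p) x"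
  unfolding rpoly_def by (simp add: map_poly_map_poly o_def)

lemma rpoly_dvd_root: "p dvd q \<Longrightarrow> rpoly p x = 0 \<Longrightarrow> rpoly q x = 0"
  by (elim dvdE) simp

lemma of_rat_in_Ints_iff: "(of_rat q :: 'a::field_char_0) \<in> \<int> \<longleftrightarrow> q \<in> \<int>"
proof
  assume "(of_rat q :: 'a) \<in> \<int>"
  then obtain k where "(of_rat q :: 'a) = of_int k" by (elim Ints_cases)
  then have "q = of_int k" by (metis of_rat_eq_iff of_rat_of_int_eq)
  then show "q \<in> \<int>" by simp
qed (auto elim: Ints_cases)

lemma coeff_monic_dvd_Ints:
  fixes F G :: "rat poly"
  assumes F: "monic F" "\<And>i. coeff F i \<in> \<int>" and G: "monic G" "G dvd F"
  shows "coeff G i \<in> \<int>"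
proof -
  define Gc :: "complex poly" where "Gc = map_poly of_rat G"
  obtain zs where "Polynomial.smult (lead_coeff Gc) (\<Prod>z\<leftarrow>zs. [:- z, 1:]) = Gc"
    using fundamental_theorem_algebra_factorized[of Gc] by blast
  moreover have "lead_coeff Gc = 1" unfolding Gc_def using G(1) by simp
  ultimately have zs: "Gc = (\<Prod>z\<leftarrow>zs. [:- z, 1:])" by simp
  have "algebraic_int z" if "z \<in> set zs" for z
  proof (rule algebraic_int.intros)
    have "rpoly G z = 0" using that unfolding rpoly_def Gc_def[symmetric] zs poly_prod_list
      by simp
    then show "poly (map_poly of_rat F) z = 0"
      using rpoly_dvd_root[OF G(2)] unfolding rpoly_def by blast
  qed (use F in \<open>auto simp: coeff_map_poly of_rat_in_Ints_iff\<close>)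
  then have "algebraic_int (coeff Gc i)"
    unfolding zs by (intro algebraic_int_coeff_prod_linear) blast
  then have "algebraic_int (of_rat (coeff G i) :: complex)"
    by (simp add: Gc_def coeff_map_poly)
  then have "(of_rat (coeff G i) :: complex) \<in> \<int>"
    by (rule rational_algebraic_int_is_int) simp
  then show ?thesis by (simp only: of_rat_in_Ints_iff)
qed

lemma monic_f_poly_rat:
  assumes "n \<ge> 1"
  shows "monic (of_int_poly (f_poly n a c) :: rat poly)"
    and "degree (of_int_poly (f_poly n a c) :: rat poly) = n"
  using degree_f_poly[OF assms] lead_coeff_f_poly[OF assms] by simp_all

text \<open>A factorisation \<open>f\<^sub>c = G H\<close> into monic polynomials has integer coefficients, so it gives
  \<open>G(t) H(t) = -1\<close>, hence \<open>G(t) + H(t) = 0\<close>, at each of the \<open>n\<close> nodes \<open>t\<close>, although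
  \<open>deg (G + H) < n\<close>.\<close>
lemma f_poly_no_monic_factorization:
  fixes G H :: "rat poly"
  assumes n: "n \<ge> 1" and inj: "inj_on a {..<n-1}" and c: "c \<notin> a ` {..<n-1}"
    and GH: "of_int_poly (f_poly n a c) = G * H" "monic G" "monic H" "degree G > 0" "degree H > 0"
  shows False
proof -
  define F :: "rat poly" where "F = of_int_poly (f_poly n a c)"
  have degF: "degree F = n" and monF: "monic F" and intF: "\<And>i. coeff F i \<in> \<int>"
    unfolding F_def using monic_f_poly_rat[OF n] by (simp_all add: coeff_map_poly)
  have "G dvd F" "H dvd F" using GH(1) unfolding F_def by simp_all
  then have intGH: "coeff G i \<in> \<int>" "coeff H i \<in> \<int>" for i
    using coeff_monic_dvd_Ints[OF monF intF] GH(2,3) by blast+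
  define T where "T = (of_int :: int \<Rightarrow> rat) ` insert c (a ` {..<n-1})"
  have "T \<subseteq> {x. poly (G + H) x = 0}"
  proof
    fix x assume "x \<in> T"
    then obtain t where t: "t \<in> insert c (a ` {..<n-1})" "x = of_int t" unfolding T_def by auto
    have "poly G x * poly H x = -1"
      using poly_f_poly_node[OF t(1), where 'a = rat] unfolding t(2) GH(1) by simp
    moreover have "poly G x \<in> \<int>" "poly H x \<in> \<int>" using intGH t(2) by (auto intro: poly_in_Ints)
    ultimately show "x \<in> {x. poly (G + H) x = 0}"
      using Ints_mult_eq_minus_one_imp_add_eq_0 by simp
  qed
  moreover have nz: "G + H \<noteq> 0"
  proof
    assume "G + H = 0"
    then have "H = - G" by (simp add: eq_neg_iff_add_eq_0 add.commute)
    with GH(2,3) show False by simp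
  qed
  ultimately have "card T \<le> degree (G + H)"
    using card_mono[OF poly_roots_finite[OF nz]] card_poly_roots_bound[OF nz] order.trans by blast
  moreover have "card T = n"
  proof -
    have "card (insert c (a ` {..<n-1})) = n" using inj c n by (simp add: card_image)
    then show ?thesis unfolding T_def by (subst card_image) (auto intro: inj_onI)
  qed
  moreover have "degree G < n" "degree H < n"
  proof -
    have "G \<noteq> 0" "H \<noteq> 0" using GH(2,3) by auto
    then have "n = degree G + degree H" using degF GH(1) unfolding F_def by (simp add: degree_mult_eq)
    then show "degree G < n" "degree H < n" using GH(4,5) by linarith+
  qed
  ultimately show False using degree_add_le_max[of G H] by linarith
qed

lemma irreducible_f_poly:
  assumes n: "n \<ge> 1" and inj: "inj_on a {..<n-1}" and c: "c \<notin> a ` {..<n-1}"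
  shows "irreducible (of_int_poly (f_poly n a c) :: rat poly)"
proof -
  have "irreducible\<^sub>d (of_int_poly (f_poly n a c) :: rat poly)"
  proof (rule irreducible\<^sub>dI)
    show "degree (of_int_poly (f_poly n a c) :: rat poly) > 0" using monic_f_poly_rat[OF n] n by simp
    fix q r :: "rat poly"
    assume q: "degree q > 0" and r: "degree r > 0" and qr: "of_int_poly (f_poly n a c) = q * r"
    define G where "G = Polynomial.smult (inverse (lead_coeff q)) q"
    define H where "H = Polynomial.smult (lead_coeff q) r"
    have "q \<noteq> 0" using q by auto
    then have GH: "of_int_poly (f_poly n a c) = G * H" "monic G" "degree G > 0" "degree H > 0"
      using q r unfolding qr G_def H_def by simp_all
    moreover have "monic H"
      using GH(1,2) monic_f_poly_rat(1)[OF n, of a c] by (metis lead_coeff_mult mult_1)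
    ultimately show False using f_poly_no_monic_factorization[OF n inj c] by blast
  qed
  then show ?thesis by simp
qed

lemma monic_irreducible_root_dvd:
  fixes F P :: "rat poly"
  assumes "monic F" "irreducible F" "rpoly F \<alpha> = 0" "rpoly P \<alpha> = 0"
  shows "F dvd P"
proof -
  have "gcd F P \<noteq> 1"
  proof
    assume "gcd F P = 1"
    then have "rpoly (fst (bezout_coefficients F P) * F + snd (bezout_coefficients F P) * P) \<alpha> = 1"
      by (simp only: bezout_coefficients_fst_snd rpoly_1)
    with assms(3,4) show False by simp
  qed
  with monic_irreducible_gcd[OF assms(1,2), of P] show ?thesis by (metis gcd_dvd2 insertE singletonD)
qed

lemma monic_irreducible_root_inverse:
  fixes F P :: "rat poly"
  assumes "monic F" "irreducible F" "rpoly F \<alpha> = 0" "rpoly P \<alpha> \<noteq> 0"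
  obtains Q where "rpoly Q \<alpha> * rpoly P \<alpha> = 1"
proof -
  have "gcd F P \<noteq> F" using assms(4) rpoly_dvd_root[OF _ assms(3)] by (metis gcd_dvd2)
  with monic_irreducible_gcd[OF assms(1,2), of P] have "gcd F P = 1" by simp
  then have "rpoly (fst (bezout_coefficients F P) * F + snd (bezout_coefficients F P) * P) \<alpha> = 1"
    by (simp only: bezout_coefficients_fst_snd rpoly_1)
  with assms(3) show ?thesis using that by simp
qed

section \<open>Isomorphic fields generated by roots\<close>

definition is_subfield :: "complex set \<Rightarrow> bool" where
  "is_subfield F \<longleftrightarrow> 0 \<in> F \<and> 1 \<in> F \<and> (\<forall>x\<in>F. \<forall>y\<in>F. x + y \<in> F \<and> x * y \<in> F) \<and>
     (\<forall>x\<in>F. - x \<in> F) \<and> (\<forall>x\<in>F. x \<noteq> 0 \<longrightarrow> inverse x \<in> F)"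

lemma is_subfield_gen_field: "is_subfield (gen_field \<alpha>)"
  and gen_field_in: "\<alpha> \<in> gen_field \<alpha>"
  unfolding is_subfield_def gen_field_def by auto

lemma gen_field_least: "is_subfield F \<Longrightarrow> \<alpha> \<in> F \<Longrightarrow> gen_field \<alpha> \<subseteq> F"
  unfolding is_subfield_def gen_field_def by blast

lemma is_subfield_of_rat:
  assumes F: "is_subfield F"
  shows "of_rat q \<in> F"
proof -
  have nat: "of_nat k \<in> F" for k
    using F by (induction k) (auto simp: is_subfield_def)
  have int: "of_int k \<in> F" for k
    using nat[of "nat \<bar>k\<bar>"] F unfolding is_subfield_def by (cases "k \<ge> 0") force+
  obtain p r where q: "q = Rat.Fract p r" and r: "r > 0" by (cases q) auto
  have "of_rat q = of_int p * inverse (of_int r :: complex)"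
    unfolding q using r by (simp add: of_rat_rat divide_inverse)
  with int[of p] int[of r] r F show ?thesis unfolding is_subfield_def by simp
qed

lemma is_subfield_rpoly:
  assumes F: "is_subfield F" and x: "x \<in> F"
  shows "rpoly P x \<in> F"
proof (induction P rule: pCons_induct)
  case 0
  then show ?case using F unfolding is_subfield_def by simp
next
  case (pCons c P)
  then show ?case unfolding rpoly_pCons using F x is_subfield_of_rat[OF F] unfolding is_subfield_def by auto
qed

lemma gen_field_subset_rpoly:
  fixes F :: "rat poly"
  assumes "monic F" "irreducible F" "rpoly F \<alpha> = 0"
  shows "gen_field \<alpha> \<subseteq> range (\<lambda>P. rpoly P \<alpha>)"
proof (rule gen_field_least)
  show "\<alpha> \<in> range (\<lambda>P. rpoly P \<alpha>)" by (rule range_eqI[of _ _ "[:0, 1:]"]) simp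
  show "is_subfield (range (\<lambda>P. rpoly P \<alpha>))"
    unfolding is_subfield_def
  proof (intro conjI ballI impI)
    show "0 \<in> range (\<lambda>P. rpoly P \<alpha>)" by (rule range_eqI[of _ _ 0]) simp
    show "1 \<in> range (\<lambda>P. rpoly P \<alpha>)" by (rule range_eqI[of _ _ 1]) simp
    fix x y assume "x \<in> range (\<lambda>P. rpoly P \<alpha>)" "y \<in> range (\<lambda>P. rpoly P \<alpha>)"
    then obtain P Q where P: "x = rpoly P \<alpha>" and Q: "y = rpoly Q \<alpha>" by blast
    show "x + y \<in> range (\<lambda>P. rpoly P \<alpha>)" unfolding P Q by (rule range_eqI[of _ _ "P + Q"]) simp
    show "x * y \<in> range (\<lambda>P. rpoly P \<alpha>)" unfolding P Q by (rule range_eqI[of _ _ "P * Q"]) simp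
    show "- x \<in> range (\<lambda>P. rpoly P \<alpha>)" unfolding P by (rule range_eqI[of _ _ "- P"]) simp
    assume "x \<noteq> 0"
    then obtain R where "rpoly R \<alpha> * x = 1"
      using monic_irreducible_root_inverse[OF assms] P by blast
    then have "inverse x = rpoly R \<alpha>" by (simp add: inverse_unique mult.commute)
    then show "inverse x \<in> range (\<lambda>P. rpoly P \<alpha>)" by simp
  qed
qed

definition field_hom_on :: "complex set \<Rightarrow> (complex \<Rightarrow> complex) \<Rightarrow> bool" where
  "field_hom_on F \<phi> \<longleftrightarrow> \<phi> 1 = 1 \<and> (\<forall>x\<in>F. \<forall>y\<in>F. \<phi> (x + y) = \<phi> x + \<phi> y \<and> \<phi> (x * y) = \<phi> x * \<phi> y)"

context
  fixes F :: "complex set" and \<phi> :: "complex \<Rightarrow> complex"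
  assumes F: "is_subfield F" and \<phi>: "field_hom_on F \<phi>"
begin

lemma field_hom_on_0: "\<phi> 0 = 0"
proof -
  have "\<phi> (0 + 0) = \<phi> 0 + \<phi> 0" using F \<phi> unfolding is_subfield_def field_hom_on_def by blast
  then show ?thesis by simp
qed

lemma field_hom_on_of_rat: "\<phi> (of_rat q) = of_rat q"
proof -
  have add: "\<phi> (x + y) = \<phi> x + \<phi> y" and mult: "\<phi> (x * y) = \<phi> x * \<phi> y" if "x \<in> F" "y \<in> F" for x y
    using that \<phi> unfolding field_hom_on_def by auto
  have Fnat: "of_nat k \<in> F" for k using is_subfield_of_rat[OF F, of "of_nat k"] by simp
  have nat: "\<phi> (of_nat k) = of_nat k" for k
  proof (induction k)
    case 0 then show ?case using field_hom_on_0 by simp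
  next
    case (Suc k)
    have "\<phi> (1 + of_nat k) = \<phi> 1 + \<phi> (of_nat k)" using add[OF _ Fnat] F unfolding is_subfield_def by blast
    then show ?case using Suc \<phi> unfolding field_hom_on_def by simp
  qed
  have neg: "\<phi> (- x) = - \<phi> x" if "x \<in> F" for x
    using add[OF that, of "- x"] that F field_hom_on_0 unfolding is_subfield_def
    by (simp add: eq_neg_iff_add_eq_0 add.commute)
  have int: "\<phi> (of_int k) = of_int k" for k
    using nat[of "nat \<bar>k\<bar>"] neg[OF Fnat, of "nat \<bar>k\<bar>"] by (cases "k \<ge> 0") auto
  obtain p r where q: "q = Rat.Fract p r" and r: "r > 0" by (cases q) auto
  let ?r = "of_int r :: complex"
  have Fr: "?r \<in> F" "inverse ?r \<in> F" "of_int p \<in> F"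
    using is_subfield_of_rat[OF F, of "of_int _"] F r unfolding is_subfield_def by auto
  have "1 = \<phi> (?r * inverse ?r)" using r \<phi> unfolding field_hom_on_def by simp
  also have "\<dots> = ?r * \<phi> (inverse ?r)" using mult[OF Fr(1,2)] int by simp
  finally have "\<phi> (inverse ?r) = inverse ?r" using r by (simp add: field_simps)
  moreover have "of_rat q = of_int p * inverse ?r" unfolding q using r by (simp add: of_rat_rat divide_inverse)
  ultimately show ?thesis using mult[OF Fr(3,2)] int by simp
qed

lemma field_hom_on_rpoly:
  assumes x: "x \<in> F"
  shows "\<phi> (rpoly P x) = rpoly P (\<phi> x)"
proof (induction P rule: pCons_induct)
  case 0
  then show ?case using field_hom_on_0 by simp
next
  case (pCons c P)
  have "of_rat c \<in> F" "x * rpoly P x \<in> F"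
    using is_subfield_of_rat[OF F] is_subfield_rpoly[OF F x] x F unfolding is_subfield_def by auto
  then show ?case using pCons x is_subfield_rpoly[OF F x] \<phi> field_hom_on_of_rat
    unfolding rpoly_pCons field_hom_on_def by simp
qed

end

text \<open>\<open>E(\<theta>)\<close> is the image of \<open>\<xi>\<close> under an isomorphism \<open>\<rat>(\<xi>) \<cong> \<rat>(\<theta>)\<close>, and \<open>R\<close> writes \<open>\<theta>\<close>
  back as a polynomial in it.\<close>
lemma gen_field_iso_transfer:
  fixes F G :: "rat poly"
  assumes F: "monic F" "irreducible F" "rpoly F \<xi> = 0"
    and G: "monic G" "irreducible G" "rpoly G \<theta> = 0"
    and iso: "fields_iso (gen_field \<xi>) K" "fields_iso (gen_field \<theta>) K"
  obtains E R where "rpoly F (rpoly E \<theta>) = 0" "rpoly R (rpoly E \<theta>) = \<theta>"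
proof -
  obtain \<phi> where \<phi>: "bij_betw \<phi> (gen_field \<xi>) K" "field_hom_on (gen_field \<xi>) \<phi>"
    using iso(1) unfolding fields_iso_def field_hom_on_def by blast
  obtain \<psi> where \<psi>: "bij_betw \<psi> (gen_field \<theta>) K" "field_hom_on (gen_field \<theta>) \<psi>"
    using iso(2) unfolding fields_iso_def field_hom_on_def by blast
  note hom\<phi> = field_hom_on_rpoly[OF is_subfield_gen_field \<phi>(2)] field_hom_on_0[OF is_subfield_gen_field \<phi>(2)]
  note hom\<psi> = field_hom_on_rpoly[OF is_subfield_gen_field \<psi>(2)] field_hom_on_0[OF is_subfield_gen_field \<psi>(2)]
  have inj\<psi>: "x = y" if "x \<in> gen_field \<theta>" "y \<in> gen_field \<theta>" "\<psi> x = \<psi> y" for x y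
    using \<psi>(1) that unfolding bij_betw_def inj_on_def by blast
  have "\<phi> \<xi> \<in> K" using \<phi>(1) gen_field_in bij_betwE by blast
  then obtain \<eta> where \<eta>: "\<eta> \<in> gen_field \<theta>" "\<psi> \<eta> = \<phi> \<xi>" using \<psi>(1) by (metis bij_betw_iff_bijections)
  have "\<psi> (rpoly F \<eta>) = rpoly F (\<phi> \<xi>)" using hom\<psi>(1)[OF \<eta>(1)] \<eta>(2) by simp
  also have "\<dots> = \<phi> (rpoly F \<xi>)" using hom\<phi>(1)[OF gen_field_in] by simp
  also have "\<dots> = \<psi> 0" using F(3) hom\<phi>(2) hom\<psi>(2) by simp
  finally have root: "rpoly F \<eta> = 0"
    using inj\<psi> is_subfield_rpoly[OF is_subfield_gen_field \<eta>(1)] is_subfield_gen_field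
    unfolding is_subfield_def by blast
  have "\<psi> \<theta> \<in> K" using \<psi>(1) gen_field_in bij_betwE by blast
  then obtain y where y: "y \<in> gen_field \<xi>" "\<phi> y = \<psi> \<theta>" using \<phi>(1) by (metis bij_betw_iff_bijections)
  obtain R where R: "y = rpoly R \<xi>" using gen_field_subset_rpoly[OF F] y(1) by blast
  have "\<psi> (rpoly R \<eta>) = \<psi> \<theta>"
    using hom\<psi>(1)[OF \<eta>(1)] \<eta>(2) hom\<phi>(1)[OF gen_field_in] R y(2) by simp
  then have inv: "rpoly R \<eta> = \<theta>"
    using inj\<psi> is_subfield_rpoly[OF is_subfield_gen_field \<eta>(1)] gen_field_in by blast
  obtain E where "\<eta> = rpoly E \<theta>" using gen_field_subset_rpoly[OF G] \<eta>(1) by blast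
  with root inv show ?thesis by (intro that) simp_all
qed

lemma rpoly_embedding_conjugate:
  fixes G E F R :: "rat poly"
  assumes G: "monic G" "irreducible G" "rpoly G \<theta> = 0" "rpoly G \<theta>' = 0"
    and E: "rpoly F (rpoly E \<theta>) = 0" "rpoly R (rpoly E \<theta>) = \<theta>"
  shows "rpoly F (rpoly E \<theta>') = 0" "rpoly R (rpoly E \<theta>') = \<theta>'"
proof -
  have "G dvd F \<circ>\<^sub>p E" "G dvd R \<circ>\<^sub>p E - [:0, 1:]"
    using E by (auto intro!: monic_irreducible_root_dvd[OF G(1-3)] simp: rpoly_pcompose)
  then show "rpoly F (rpoly E \<theta>') = 0" "rpoly R (rpoly E \<theta>') = \<theta>'"
    using rpoly_dvd_root[OF _ G(4)] by (fastforce simp: rpoly_pcompose)+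
qed

section \<open>Norms\<close>

lemma vandermonde_det_nonzero:
  fixes \<theta> :: "nat \<Rightarrow> 'a::field"
  assumes inj: "inj_on \<theta> {..<n}"
  shows "det (mat n n (\<lambda>(i, k). \<theta> k ^ i)) \<noteq> 0"
proof
  define V where "V = mat n n (\<lambda>(i, k). \<theta> k ^ i)"
  have V: "V \<in> carrier_mat n n" unfolding V_def by simp
  assume "det (mat n n (\<lambda>(i, k). \<theta> k ^ i)) = 0"
  then have "det (transpose_mat V) = 0" unfolding V_def by (subst det_transpose) auto
  then obtain v where v: "v \<in> carrier_vec n" "v \<noteq> 0\<^sub>v n" "transpose_mat V *\<^sub>v v = 0\<^sub>v n"
    using det_0_iff_vec_prod_zero[of "transpose_mat V" n] V by auto
  define P :: "'a poly" where "P = (\<Sum>i<n. monom (v $ i) i)"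
  have root: "poly P (\<theta> k) = 0" if k: "k < n" for k
  proof -
    have "0 = (transpose_mat V *\<^sub>v v) $ k" using v(3) k by simp
    also have "\<dots> = (\<Sum>i<n. \<theta> k ^ i * v $ i)"
      using k v(1) V unfolding V_def by (auto simp: scalar_prod_def lessThan_atLeast0 intro!: sum.cong)
    also have "\<dots> = poly P (\<theta> k)" unfolding P_def by (simp add: poly_sum poly_monom mult.commute)
    finally show ?thesis by simp
  qed
  have "P = 0"
  proof (rule ccontr)
    assume P0: "P \<noteq> 0"
    have "n \<noteq> 0" using v(1,2) by (metis carrier_vecD eq_vecI less_nat_zero_code index_zero_vec(2))
    moreover have "degree P \<le> n - 1" unfolding P_def
      by (rule degree_sum_le) (auto intro: order.trans[OF degree_monom_le])
    moreover have "card (\<theta> ` {..<n}) \<le> card {x. poly P x = 0}"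
      using root poly_roots_finite[OF P0] by (intro card_mono) auto
    then have "n \<le> card {x. poly P x = 0}" using inj by (simp add: card_image)
    moreover have "card {x. poly P x = 0} \<le> degree P" by (rule card_poly_roots_bound[OF P0])
    ultimately show False by linarith
  qed
  have "v = 0\<^sub>v n"
  proof (rule eq_vecI)
    fix i assume "i < dim_vec (0\<^sub>v n :: 'a vec)"
    then have "coeff P i = v $ i" unfolding P_def by (simp add: coeff_sum)
    with \<open>P = 0\<close> show "v $ i = 0\<^sub>v n $ i" using \<open>i < dim_vec (0\<^sub>v n)\<close> by simp
  qed (use v(1) in simp)
  with v(2) show False by simp
qed

lemma poly_eq_sum_lessThan:
  fixes p :: "'a::comm_semiring_1 poly"
  assumes "degree p < n"
  shows "poly p x = (\<Sum>j<n. coeff p j * x ^ j)"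
  unfolding poly_altdef using assms
  by (intro sum.mono_neutral_left) (auto simp: coeff_eq_0)

lemma rpoly_times_power_at_root:
  fixes F D :: "rat poly" and t :: "'a::field_char_0"
  assumes "F \<noteq> 0" "degree F = n" "n \<noteq> 0" and t: "rpoly F t = 0"
  shows "rpoly D t * t ^ i = (\<Sum>j<n. of_rat (coeff ((D * monom 1 i) mod F) j) * t ^ j)"
proof -
  have deg: "degree ((D * monom 1 i) mod F) < n"
    using degree_mod_less[OF assms(1), of "D * monom 1 i"] assms by auto
  have "rpoly D t * t ^ i = rpoly (D * monom 1 i) t"
    by (simp add: rpoly_def of_rat_poly_hom.hom_mult poly_monom)
  also have "\<dots> = rpoly ((D * monom 1 i) div F * F + (D * monom 1 i) mod F) t"
    by (simp only: div_mult_mod_eq)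
  also have "\<dots> = rpoly ((D * monom 1 i) mod F) t"
    by (simp only: rpoly_add rpoly_mult t mult_zero_right add_0)
  finally show ?thesis
    unfolding rpoly_def using deg by (simp add: poly_eq_sum_lessThan[of _ n] coeff_map_poly)
qed

text \<open>The product is the determinant of multiplication by \<open>D\<close> on \<open>\<rat>[x]/(F)\<close>: the rational
  matrix of this map is conjugate, via the Vandermonde matrix of the \<open>\<theta> k\<close>, to the diagonal
  matrix of the \<open>D(\<theta> k)\<close>.\<close>
lemma prod_rpoly_roots_in_Rats:
  fixes F D :: "rat poly" and \<theta> :: "nat \<Rightarrow> 'a::field_char_0"
  assumes F: "F \<noteq> 0" "degree F = n" and roots: "\<And>k. k < n \<Longrightarrow> rpoly F (\<theta> k) = 0"
    and inj: "inj_on \<theta> {..<n}"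
  shows "(\<Prod>k<n. rpoly D (\<theta> k)) \<in> \<rat>"
proof (cases "n = 0")
  case False
  define M :: "rat mat" where "M = mat n n (\<lambda>(i, j). coeff ((D * monom 1 i) mod F) j)"
  define Mc :: "'a mat" where "Mc = of_rat_hom.mat_hom M"
  define V :: "'a mat" where "V = mat n n (\<lambda>(i, k). \<theta> k ^ i)"
  define \<Delta> :: "'a mat" where "\<Delta> = mat n n (\<lambda>(i, k). if i = k then rpoly D (\<theta> k) else 0)"
  have car: "Mc \<in> carrier_mat n n" "V \<in> carrier_mat n n" "\<Delta> \<in> carrier_mat n n"
    unfolding Mc_def M_def V_def \<Delta>_def by auto
  have "Mc * V = V * \<Delta>"
  proof (rule eq_matI)
    fix i k assume "i < dim_row (V * \<Delta>)" "k < dim_col (V * \<Delta>)"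
    then have i: "i < n" and k: "k < n" using car by auto
    have "(Mc * V) $$ (i, k) = (\<Sum>j<n. of_rat (coeff ((D * monom 1 i) mod F) j) * \<theta> k ^ j)"
      using i k unfolding Mc_def M_def V_def
      by (auto simp: scalar_prod_def lessThan_atLeast0 intro!: sum.cong)
    also have "\<dots> = rpoly D (\<theta> k) * \<theta> k ^ i"
      using rpoly_times_power_at_root[OF F False roots[OF k]] by simp
    also have "\<dots> = (\<Sum>j<n. \<theta> j ^ i * (if j = k then rpoly D (\<theta> k) else 0))"
      using k by (simp add: if_distrib mult.commute cong: if_cong)
    also have "\<dots> = (V * \<Delta>) $$ (i, k)"
      using i k unfolding V_def \<Delta>_def by (auto simp: scalar_prod_def lessThan_atLeast0 intro!: sum.cong)
    finally show "(Mc * V) $$ (i, k) = (V * \<Delta>) $$ (i, k)" .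
  qed (use car in auto)
  then have "det Mc * det V = det V * det \<Delta>"
    using det_mult[OF car(1) car(2)] det_mult[OF car(2) car(3)] by metis
  moreover have "det V \<noteq> 0" unfolding V_def by (rule vandermonde_det_nonzero[OF inj])
  ultimately have "det Mc = det \<Delta>" by simp
  also have "det \<Delta> = prod_list (diag_mat \<Delta>)"
    by (rule det_upper_triangular[OF _ car(3)]) (auto simp: upper_triangular_def \<Delta>_def)
  also have "\<dots> = (\<Prod>k<n. rpoly D (\<theta> k))"
    unfolding diag_mat_def \<Delta>_def
    by (simp add: prod.distinct_set_conv_list[of "[0..<n]", symmetric] atLeast0LessThan)
  finally show ?thesis unfolding Mc_def of_rat_hom.hom_det by (metis Rats_of_rat)
qed simp

section \<open>Location of the roots of \<open>f\<^sub>c\<close> for large \<open>|c|\<close>\<close>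

definition node_sum :: "nat \<Rightarrow> (nat \<Rightarrow> int) \<Rightarrow> real" where
  "node_sum n a = (\<Sum>i<n-1. \<bar>real_of_int (a i)\<bar>)"

definition near_shift :: "nat \<Rightarrow> int \<Rightarrow> complex \<Rightarrow> bool" where
  "near_shift n c z \<longleftrightarrow> cmod (z - of_int c) * (\<bar>real_of_int c\<bar> / 2) ^ (n-1) \<le> 1"

definition near_node :: "nat \<Rightarrow> (nat \<Rightarrow> int) \<Rightarrow> int \<Rightarrow> complex \<Rightarrow> nat \<Rightarrow> bool" where
  "near_node n a c z i \<longleftrightarrow> i < n - 1 \<and> cmod (z - of_int (a i)) * \<bar>real_of_int c\<bar> \<le> 2 ^ (n-1)"

lemma node_sum_nonneg: "node_sum n a \<ge> 0"
  unfolding node_sum_def by (simp add: sum_nonneg)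

lemma norm_node_le_node_sum: "i < n - 1 \<Longrightarrow> cmod (of_int (a i) :: complex) \<le> node_sum n a"
  unfolding node_sum_def norm_of_int by (rule member_le_sum) auto

lemma norm_node_diff_ge_1:
  assumes "inj_on a {..<n-1}" "i < n - 1" "j < n - 1" "i \<noteq> j"
  shows "cmod (of_int (a i) - of_int (a j) :: complex) \<ge> 1"
proof -
  have "a i \<noteq> a j" using assms unfolding inj_on_def by auto
  then have "\<bar>real_of_int (a i - a j)\<bar> \<ge> 1" by linarith
  then show ?thesis by (metis norm_of_int of_int_diff)
qed

lemma norm_f_poly_root_factors:
  assumes "poly (of_int_poly (f_poly n a c)) z = 0"
  shows "(\<Prod>i<n-1. cmod (z - of_int (a i))) * cmod (z - of_int c) = 1"
proof -
  have "(\<Prod>i<n-1. (z - of_int (a i))) * (z - of_int c) = 1"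
    using assms unfolding poly_f_poly by simp
  then show ?thesis by (metis norm_mult norm_one prod_norm)
qed

text \<open>If \<open>|c|\<close> is large, a root of \<open>f\<^sub>c\<close> is either very close to \<open>c\<close> or very close to one of the
  nodes \<open>a\<^sub>i\<close>, according to whether all nodes are at distance at least \<open>1/2\<close> or not.\<close>
lemma f_poly_root_near_shift:
  fixes z :: complex
  assumes n: "n \<ge> 1" and C: "\<bar>real_of_int c\<bar> \<ge> 2 ^ n + 2 * node_sum n a + 2"
    and root: "poly (of_int_poly (f_poly n a c)) z = 0"
    and far: "\<And>i. i < n - 1 \<Longrightarrow> cmod (z - of_int (a i)) \<ge> 1/2"
  shows "near_shift n c z"
proof -
  define C where "C = \<bar>real_of_int c\<bar>"
  define d where "d = cmod (z - of_int c)"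
  have M0: "node_sum n a \<ge> 0" by (rule node_sum_nonneg)
  have cC: "cmod (of_int c :: complex) = C" unfolding C_def by (rule norm_of_int)
  have prod: "(\<Prod>i<n-1. cmod (z - of_int (a i))) * d = 1"
    using norm_f_poly_root_factors[OF root] unfolding d_def .
  have "(1/2) ^ (n-1) \<le> (\<Prod>i<n-1. cmod (z - of_int (a i)))"
    using prod_mono[of "{..<n-1}" "\<lambda>_. 1/2::real" "\<lambda>i. cmod (z - of_int (a i))"] far by simp
  then have "(1/2) ^ (n-1) * d \<le> (\<Prod>i<n-1. cmod (z - of_int (a i))) * d"
    by (rule mult_right_mono) (simp add: d_def)
  then have half: "(1/2) ^ (n-1) * d \<le> 1" using prod by simp
  have "d = 2 ^ (n-1) * ((1/2) ^ (n-1) * d)" by (simp add: power_one_over)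
  also have "\<dots> \<le> 2 ^ (n-1)" using half by (simp add: mult_le_cancel_left1)
  finally have "d \<le> 2 ^ (n-1)" .
  moreover have "2 * (2::real) ^ (n-1) = 2 ^ n" using n by (cases n) auto
  moreover have zc: "C - d \<le> cmod z"
    using norm_triangle_ineq4[of z "z - of_int c"] cC unfolding d_def by simp
  ultimately have big: "cmod (z - of_int (a i)) \<ge> C / 2" if "i < n - 1" for i
    using norm_triangle_ineq2[of z "of_int (a i)"] norm_node_le_node_sum[of i n a, OF that] C M0
    unfolding C_def by linarith
  have C2: "C / 2 \<ge> 1" using C M0 one_le_power[of "2::real" n] unfolding C_def by linarith
  have "(C/2) ^ (n-1) \<le> (\<Prod>i<n-1. cmod (z - of_int (a i)))"
    using prod_mono[of "{..<n-1}" "\<lambda>_. C/2" "\<lambda>i. cmod (z - of_int (a i))"] big C2 by simp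
  then have "(C/2) ^ (n-1) * d \<le> (\<Prod>i<n-1. cmod (z - of_int (a i))) * d"
    by (rule mult_right_mono) (simp add: d_def)
  then have "d * (C/2) ^ (n-1) \<le> 1" using prod by (simp add: mult.commute)
  then show "near_shift n c z" unfolding near_shift_def d_def C_def .
qed

lemma f_poly_root_near_node:
  fixes z :: complex
  assumes inj: "inj_on a {..<n-1}" and C: "\<bar>real_of_int c\<bar> \<ge> 2 ^ n + 2 * node_sum n a + 2"
    and root: "poly (of_int_poly (f_poly n a c)) z = 0"
    and i: "i < n - 1" and close: "cmod (z - of_int (a i)) < 1/2"
  shows "near_node n a c z i"
proof -
  define C where "C = \<bar>real_of_int c\<bar>"
  define e where "e = cmod (z - of_int (a i))"
  define P where "P = (\<Prod>j\<in>{..<n-1}-{i}. cmod (z - of_int (a j)))"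
  define d where "d = cmod (z - of_int c)"
  have M0: "node_sum n a \<ge> 0" by (rule node_sum_nonneg)
  have zM: "cmod z \<le> node_sum n a + 1/2"
    using norm_triangle_ineq[of "of_int (a i)" "z - of_int (a i)"] norm_node_le_node_sum[of i n a, OF i] close
    by simp
  have "C \<le> cmod z + d"
    using norm_triangle_ineq4[of z "z - of_int c"] unfolding d_def C_def by simp
  then have dC: "C / 2 \<le> d" using zM C M0 one_le_power[of "2::real" n] unfolding C_def by linarith
  have P: "(1/2) ^ (n-2) \<le> P"
  proof -
    have "cmod (z - of_int (a j)) \<ge> 1/2" if "j < n - 1" "j \<noteq> i" for j
      using norm_node_diff_ge_1[OF inj i that(1)] that(2) close
        norm_triangle_ineq4[of "z - of_int (a j)" "z - of_int (a i)"] by simp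
    then have "(\<Prod>j\<in>{..<n-1}-{i}. (1/2::real)) \<le> P" unfolding P_def by (intro prod_mono) auto
    moreover have "card ({..<n-1}-{i}) = n - 2" using i by simp
    ultimately show ?thesis by simp
  qed
  moreover have "(\<Prod>j<n-1. cmod (z - of_int (a j))) = e * P"
    unfolding e_def P_def using i by (subst prod.remove[of _ i]) auto
  then have "e * P * d = 1" using norm_f_poly_root_factors[OF root] unfolding d_def by simp
  have "e * (1/2) ^ (n-2) \<le> e * P" using P by (rule mult_left_mono) (simp add: e_def)
  then have "e * (1/2) ^ (n-2) * (C/2) \<le> e * P * d"
    using dC by (rule mult_mono) (auto simp: e_def P_def C_def prod_nonneg)
  with \<open>e * P * d = 1\<close> have "e * (1/2) ^ (n-2) * (C/2) \<le> 1" by simp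
  moreover have "n - 1 = Suc (n - 2)" using i by simp
  then have "(1/2::real) ^ (n-2) * (1/2) = (1/2) ^ (n-1)" by (simp only: power_Suc2)
  ultimately have "(e * C) * (1/2) ^ (n-1) \<le> 1" by (simp add: mult_ac)
  then have "e * C \<le> 2 ^ (n-1)" by (simp add: field_simps)
  then show "near_node n a c z i" unfolding near_node_def e_def C_def using i by simp
qed

lemma prod_remove_two:
  fixes x :: "'i \<Rightarrow> 'a::comm_monoid_mult"
  assumes "finite I" "k \<in> I" "l \<in> I" "k \<noteq> l"
  shows "(\<Prod>p\<in>I. x p) = x k * x l * (\<Prod>p\<in>I - {k, l}. x p)"
proof -
  have "(\<Prod>p\<in>I. x p) = x k * (\<Prod>p\<in>I - {k}. x p)" using assms by (subst prod.remove[of _ k]) auto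
  also have "(\<Prod>p\<in>I - {k}. x p) = x l * (\<Prod>p\<in>I - {k} - {l}. x p)"
    using assms by (subst prod.remove[of _ l]) auto
  also have "I - {k} - {l} = I - {k, l}" by auto
  finally show ?thesis by (simp add: mult.assoc)
qed

lemma prod_le_one_large_factor:
  fixes x :: "'i \<Rightarrow> real"
  assumes J: "finite J" "card J \<ge> 1"
    and x: "\<And>p. p \<in> J \<Longrightarrow> 0 \<le> x p \<and> x p \<le> X" and Y: "1 \<le> Y" "Y \<le> X"
    and unique: "\<And>p q. p \<in> J \<Longrightarrow> q \<in> J \<Longrightarrow> x p > Y \<Longrightarrow> x q > Y \<Longrightarrow> p = q"
  shows "(\<Prod>p\<in>J. x p) \<le> X * Y ^ (card J - 1)"
proof (cases "\<exists>p\<in>J. x p > Y")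
  case True
  then obtain p0 where p0: "p0 \<in> J" "x p0 > Y" by blast
  have "(\<Prod>p\<in>J - {p0}. x p) \<le> Y ^ (card J - 1)"
  proof (rule prod_le_power)
    fix p assume "p \<in> J - {p0}"
    with unique[of p p0] p0 x show "0 \<le> x p \<and> x p \<le> Y" by force
  qed (use J p0 Y in auto)
  then have "x p0 * (\<Prod>p\<in>J - {p0}. x p) \<le> X * Y ^ (card J - 1)"
    using x p0(1) Y by (intro mult_mono) (auto intro: prod_nonneg)
  then show ?thesis using J p0 by (simp add: prod.remove[of J p0])
next
  case False
  have "(\<Prod>p\<in>J. x p) \<le> Y ^ card J" by (rule prod_le_power) (use x False J Y in \<open>auto simp: not_less\<close>)
  also have "Y ^ card J = Y * Y ^ (card J - 1)" using J by (cases "card J") auto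
  also have "\<dots> \<le> X * Y ^ (card J - 1)" using Y by (intro mult_right_mono) auto
  finally show ?thesis .
qed

lemma f_poly_factorization:
  assumes "n \<ge> 1"
  obtains zs where "(of_int_poly (f_poly n a c) :: complex poly) = (\<Prod>z\<leftarrow>zs. [:- z, 1:])" "length zs = n"
proof -
  let ?f = "of_int_poly (f_poly n a c) :: complex poly"
  obtain zs where "Polynomial.smult (lead_coeff ?f) (\<Prod>z\<leftarrow>zs. [:- z, 1:]) = ?f" "length zs = degree ?f"
    using fundamental_theorem_algebra_factorized[of ?f] by blast
  moreover have "lead_coeff ?f = 1" "degree ?f = n"
    using lead_coeff_f_poly[OF assms] degree_f_poly[OF assms] by simp_all
  ultimately show ?thesis by (intro that[of zs]) auto
qed

lemma poly_prod_linear_eq_0_iff: "poly (\<Prod>z\<leftarrow>zs. [:- z, 1:]) t = 0 \<longleftrightarrow> t \<in> set zs"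
  for t :: "'a::idom"
  by (induction zs) auto

lemma poly_prod_linear_nth: "poly (\<Prod>z\<leftarrow>zs. [:- z, 1:]) t = (\<Prod>k<length zs. t - zs ! k)"
  for t :: "'a::comm_ring_1"
proof (induction zs)
  case (Cons b zs)
  have "poly (\<Prod>z\<leftarrow>b # zs. [:- z, 1:]) t = (t - b) * (\<Prod>k<length zs. t - zs ! k)"
    using Cons.IH by (simp add: algebra_simps)
  also have "\<dots> = (\<Prod>k<length (b # zs). t - (b # zs) ! k)"
    by (simp only: length_Cons prod.lessThan_Suc_shift nth_Cons_0 nth_Cons_Suc)
  finally show ?case .
qed simp

text \<open>The summands are the lower bounds on \<open>|c|\<close> used below: \<open>2\<^sup>n + 2M + 2\<close> for locating the
  roots, \<open>12\<close> for the uniqueness of the root near \<open>c\<close>, and \<open>6 \<cdot> 4\<^sup>n (2M + 1)\<^sup>n\<^sup>-\<^sup>3\<close> for the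
  norm estimates.\<close>
definition shift_bound :: "nat \<Rightarrow> real \<Rightarrow> real" where
  "shift_bound n M = 2 ^ n + 6 * 4 ^ n * (2 * M + 1) ^ (n - 3) + 2 * M + 12"

lemma shift_bound_le_imp:
  assumes "0 \<le> M" "shift_bound n M \<le> C"
  shows "2 ^ n + 2 * M + 2 \<le> C" "12 \<le> C" "6 * 4 ^ n * (2 * M + 1) ^ (n - 3) < C"
proof -
  have "0 \<le> 6 * 4 ^ n * (2 * M + 1) ^ (n - 3)" "0 < (2::real) ^ n" using assms(1) by simp_all
  then show "2 ^ n + 2 * M + 2 \<le> C" "12 \<le> C" "6 * 4 ^ n * (2 * M + 1) ^ (n - 3) < C"
    using assms unfolding shift_bound_def by linarith+
qed

locale large_shift =
  fixes n :: nat and a :: "nat \<Rightarrow> int" and c :: int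
  assumes n3: "n \<ge> 3" and inj: "inj_on a {..<n-1}"
    and large: "shift_bound n (node_sum n a) \<le> \<bar>real_of_int c\<bar>"
begin

abbreviation "C \<equiv> \<bar>real_of_int c\<bar>"
abbreviation "M \<equiv> node_sum n a"
abbreviation root :: "complex \<Rightarrow> bool" where
  "root z \<equiv> poly (of_int_poly (f_poly n a c)) z = 0"

lemma M_nonneg: "M \<ge> 0"
  by (rule node_sum_nonneg)

lemma C_ge: "2 ^ n + 2 * M + 2 \<le> C" "12 \<le> C" "6 * 4 ^ n * (2 * M + 1) ^ (n - 3) < C"
  using shift_bound_le_imp[OF M_nonneg large] by simp_all

lemma root_cases:
  assumes "root z"
  shows "near_shift n c z \<or> (\<exists>i. near_node n a c z i)"
proof (cases "\<forall>i<n-1. cmod (z - of_int (a i)) \<ge> 1/2")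
  case True
  then show ?thesis using f_poly_root_near_shift[OF _ C_ge(1) assms] n3 by auto
next
  case False
  then show ?thesis using f_poly_root_near_node[OF inj C_ge(1) assms] by (auto simp: not_le)
qed

lemma norm_near_shift_le:
  assumes "near_shift n c z"
  shows "cmod z \<le> C + 1"
proof -
  have "cmod (z - of_int c) \<le> cmod (z - of_int c) * (C / 2) ^ (n - 1)"
    using C_ge(2) by (intro mult_le_cancel_left1[THEN iffD2] impI one_le_power) auto
  with assms have "cmod (z - of_int c) \<le> 1" unfolding near_shift_def by linarith
  then show ?thesis using norm_triangle_ineq[of "of_int c" "z - of_int c"] by simp
qed

lemma norm_near_node_le:
  assumes "near_node n a c z i"
  shows "cmod z \<le> M + 1/2"
proof -
  have i: "i < n - 1" and e: "cmod (z - of_int (a i)) * C \<le> 2 ^ (n - 1)"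
    using assms unfolding near_node_def by auto
  have "2 * (2::real) ^ (n - 1) = 2 ^ n" using n3 by (cases n) auto
  then have "cmod (z - of_int (a i)) * (2 * 2 ^ (n - 1)) \<le> cmod (z - of_int (a i)) * C"
    using C_ge(1) M_nonneg by (intro mult_left_mono) auto
  then have "cmod (z - of_int (a i)) * (2 * 2 ^ (n - 1)) \<le> 2 ^ (n - 1)" using e by (rule order.trans)
  then have "(cmod (z - of_int (a i)) * 2) * 2 ^ (n - 1) \<le> 1 * 2 ^ (n - 1)" by (simp add: mult_ac)
  then have "cmod (z - of_int (a i)) * 2 \<le> 1" by (rule mult_right_le_imp_le) simp
  then have "cmod (z - of_int (a i)) \<le> 1/2" by simp
  then show ?thesis
    using norm_triangle_ineq[of "of_int (a i)" "z - of_int (a i)"] norm_node_le_node_sum[of i n a, OF i]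
    by simp
qed

lemma roots_list_exists:
  obtains zs :: "complex list"
  where "of_int_poly (f_poly n a c) = (\<Prod>z\<leftarrow>zs. [:- z, 1:])" "length zs = n"
proof -
  have "1 \<le> n" using n3 by linarith
  from f_poly_factorization[OF this] show ?thesis using that by blast
qed

lemma norm_root_le:
  assumes "root z"
  shows "cmod z \<le> C + 1"
  using root_cases[OF assms]
proof
  assume "\<exists>i. near_node n a c z i"
  then have "cmod z \<le> M + 1/2" using norm_near_node_le by blast
  then show ?thesis using C_ge(1) M_nonneg zero_le_power[of "2::real" n] by linarith
qed (rule norm_near_shift_le)

context
  fixes zs :: "complex list"
  assumes zs: "of_int_poly (f_poly n a c) = (\<Prod>z\<leftarrow>zs. [:- z, 1:])" "length zs = n"
begin

lemma root_iff_in_roots_list: "root z \<longleftrightarrow> z \<in> set zs"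
  unfolding zs(1) by (rule poly_prod_linear_eq_0_iff)

lemma roots_list_nth_root: "p < n \<Longrightarrow> root (zs ! p)"
  by (metis root_iff_in_roots_list zs(2) nth_mem)

lemma roots_list_at_node:
  assumes "t \<in> insert c (a ` {..<n-1})"
  shows "(\<Prod>k<n. cmod (of_int t - zs ! k)) = 1"
proof -
  have "(\<Prod>k<n. (of_int t - zs ! k)) = -1"
    using poly_f_poly_node[OF assms, where 'a = complex] zs by (simp add: poly_prod_linear_nth)
  then show ?thesis by (metis norm_minus_cancel norm_one prod_norm)
qed

lemma not_two_roots_near_shift:
  assumes kl: "k < n" "l < n" "k \<noteq> l" and near: "near_shift n c (zs ! k)" "near_shift n c (zs ! l)"
  shows False
proof -
  define x where "x = (\<lambda>p. cmod (of_int c - zs ! p))"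
  define Q where "Q = (C / 2) ^ (n - 1)"
  have "x p \<le> 3 * C" if "p < n" for p
    using norm_triangle_ineq4[of "of_int c" "zs ! p"] norm_root_le[of "zs ! p"] C_ge(2) that zs
    unfolding x_def root_iff_in_roots_list by simp
  then have "(\<Prod>p\<in>{..<n} - {k, l}. x p) \<le> (3 * C) ^ (n - 2)"
    using kl C_ge(2) by (intro prod_le_power) (auto simp: x_def card_Diff_subset)
  then have bound: "(\<Prod>p<n. x p) \<le> x k * x l * (3 * C) ^ (n - 2)"
    using kl by (auto simp: prod_remove_two[of "{..<n}" k l] x_def intro!: mult_left_mono)
  have "(\<Prod>p<n. x p) = 1" unfolding x_def by (rule roots_list_at_node) simp
  then have "Q * Q = Q * Q * (\<Prod>p<n. x p)" by simp
  also have "\<dots> \<le> Q * Q * (x k * x l * (3 * C) ^ (n - 2))"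
    by (rule mult_left_mono[OF bound]) (simp add: Q_def)
  also have "\<dots> = (x k * Q) * (x l * Q) * (3 * C) ^ (n - 2)" by (simp add: mult_ac)
  also have "\<dots> \<le> (3 * C) ^ (n - 2)"
  proof (rule mult_left_le_one_le)
    have "x k * Q \<le> 1" "0 \<le> x l * Q" "x l * Q \<le> 1"
      using near unfolding near_shift_def x_def Q_def by (simp_all add: norm_minus_commute)
    then show "(x k * Q) * (x l * Q) \<le> 1" by (rule mult_le_one)
  qed (auto simp: x_def Q_def)
  also have "\<dots> < (3 * C) ^ (n - 1)" using C_ge(2) n3 by (intro power_strict_increasing) auto
  also have "\<dots> \<le> ((C / 2) * (C / 2)) ^ (n - 1)"
  proof (rule power_mono)
    have "12 * C \<le> C * C" using C_ge(2) by (intro mult_right_mono) auto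
    moreover have "(C / 2) * (C / 2) = (C * C) / 4" by simp
    ultimately show "3 * C \<le> (C / 2) * (C / 2)" by linarith
  qed simp
  finally have "Q * Q < ((C / 2) * (C / 2)) ^ (n - 1)" .
  moreover have "Q * Q = ((C / 2) * (C / 2)) ^ (n - 1)" unfolding Q_def by (rule power_mult_distrib[symmetric])
  ultimately show False by linarith
qed

lemma prod_dist_node_others_le:
  assumes i: "i < n - 1" and kl: "k < n" "l < n" "k \<noteq> l"
  shows "(\<Prod>p\<in>{..<n} - {k, l}. cmod (of_int (a i) - zs ! p)) \<le> 2 * C * (2 * M + 1) ^ (n - 3)"
proof -
  define x where "x = (\<lambda>p. cmod (of_int (a i) - zs ! p))"
  define J where "J = {..<n} - {k, l}"
  have tri: "x p \<le> cmod (of_int (a i) :: complex) + cmod (zs ! p)" for p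
    unfolding x_def by (rule norm_triangle_ineq4)
  have x_le: "0 \<le> x p \<and> x p \<le> 2 * C" if "p < n" for p
  proof
    show "0 \<le> x p" by (simp add: x_def)
    show "x p \<le> 2 * C"
      using tri[of p] norm_root_le[OF roots_list_nth_root[OF that]] norm_node_le_node_sum[of i n a, OF i]
        C_ge(1) zero_le_power[of "2::real" n] M_nonneg by linarith
  qed
  have x_small: "x p \<le> 2 * M + 1" if p: "p < n" and not_shift: "\<not> near_shift n c (zs ! p)" for p
  proof -
    obtain j where "near_node n a c (zs ! p) j"
      using root_cases[OF roots_list_nth_root[OF p]] not_shift by blast
    then have "cmod (zs ! p) \<le> M + 1/2" by (rule norm_near_node_le)
    then show ?thesis using tri[of p] norm_node_le_node_sum[of i n a, OF i] by linarith
  qed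
  have "card J = n - 2" unfolding J_def using kl by (simp add: card_Diff_subset)
  have "(\<Prod>p\<in>J. x p) \<le> 2 * C * (2 * M + 1) ^ (card J - 1)"
  proof (rule prod_le_one_large_factor)
    show "p = q" if "p \<in> J" "q \<in> J" "x p > 2 * M + 1" "x q > 2 * M + 1" for p q
      using not_two_roots_near_shift[of p q] x_small that unfolding J_def by force
    show "finite J" "1 \<le> card J" using \<open>card J = n - 2\<close> n3 by (simp_all add: J_def)
    show "0 \<le> x p \<and> x p \<le> 2 * C" if "p \<in> J" for p using x_le that by (simp add: J_def)
    show "1 \<le> 2 * M + 1" "2 * M + 1 \<le> 2 * C"
      using C_ge(1) M_nonneg zero_le_power[of "2::real" n] by linarith+
  qed
  then show ?thesis using \<open>card J = n - 2\<close> unfolding x_def J_def by (simp add: numeral_3_eq_3)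
qed

lemma not_two_roots_near_node:
  assumes kl: "k < n" "l < n" "k \<noteq> l" and near: "near_node n a c (zs ! k) i" "near_node n a c (zs ! l) i"
  shows False
proof -
  have i: "i < n - 1" using near unfolding near_node_def by simp
  define x where "x = (\<lambda>p. cmod (of_int (a i) - zs ! p))"
  have "(\<Prod>p<n. x p) = 1" unfolding x_def using i by (intro roots_list_at_node) auto
  then have "C * C = (x k * C) * (x l * C) * (\<Prod>p\<in>{..<n} - {k, l}. x p)"
    using prod_remove_two[of "{..<n}" k l x] kl by (simp add: mult_ac)
  also have "\<dots> \<le> 2 ^ (n-1) * 2 ^ (n-1) * (2 * C * (2 * M + 1) ^ (n - 3))"
  proof (intro mult_mono)
    show "x k * C \<le> 2 ^ (n-1)" "x l * C \<le> 2 ^ (n-1)"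
      using near unfolding near_node_def x_def by (simp_all add: norm_minus_commute)
    show "(\<Prod>p\<in>{..<n} - {k, l}. x p) \<le> 2 * C * (2 * M + 1) ^ (n - 3)"
      unfolding x_def by (rule prod_dist_node_others_le[OF i kl])
  qed (auto simp: x_def prod_nonneg)
  also have "\<dots> = C * (2 * 4 ^ (n-1) * (2 * M + 1) ^ (n - 3))"
    by (simp add: mult_ac flip: power_mult_distrib)
  finally have "C * C \<le> C * (2 * 4 ^ (n-1) * (2 * M + 1) ^ (n - 3))" .
  then have "C \<le> 2 * 4 ^ (n-1) * (2 * M + 1) ^ (n - 3)"
    by (rule mult_left_le_imp_le) (use C_ge(2) in linarith)
  moreover have "2 * 4 ^ (n-1) * (2 * M + 1) ^ (n - 3) \<le> 6 * 4 ^ n * (2 * M + 1) ^ (n - 3)"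
  proof (rule mult_right_mono)
    have "(4::real) ^ (n-1) \<le> 4 ^ n" by (rule power_increasing) auto
    moreover have "(0::real) \<le> 4 ^ n" by simp
    ultimately show "2 * 4 ^ (n-1) \<le> 6 * (4::real) ^ n" by linarith
  qed (use M_nonneg in simp)
  ultimately show False using C_ge(3) by linarith
qed

lemma distinct_roots_list: "distinct zs"
proof (subst distinct_conv_nth, intro allI impI notI)
  fix k l assume kl: "k < length zs" "l < length zs" "k \<noteq> l" and eq: "zs ! k = zs ! l"
  have "root (zs ! k)" using kl zs(2) by (intro roots_list_nth_root) simp
  then consider "near_shift n c (zs ! k)" | i where "near_node n a c (zs ! k) i"
    using root_cases by blast
  then show False
    using not_two_roots_near_shift[of k l] not_two_roots_near_node[of k l] kl eq zs(2) by cases auto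
qed
end

lemma roots_enumeration:
  obtains \<theta> :: "nat \<Rightarrow> complex" where "\<forall>k<n. root (\<theta> k)" "inj_on \<theta> {..<n}"
proof -
  obtain zs :: "complex list"
    where zs: "of_int_poly (f_poly n a c) = (\<Prod>z\<leftarrow>zs. [:- z, 1:])" "length zs = n"
    by (rule roots_list_exists)
  show ?thesis
    using that[of "(!) zs"] roots_list_nth_root[OF zs] inj_on_nth[OF distinct_roots_list[OF zs]] zs(2)
    by simp
qed

lemma near_shift_root_unique:
  assumes "root z" "root w" "near_shift n c z" "near_shift n c w"
  shows "z = w"
proof -
  obtain zs :: "complex list"
    where zs: "of_int_poly (f_poly n a c) = (\<Prod>z\<leftarrow>zs. [:- z, 1:])" "length zs = n"
    by (rule roots_list_exists)
  have "z \<in> set zs" "w \<in> set zs" using assms(1,2) root_iff_in_roots_list[OF zs] by blast+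
  then obtain k l where "k < n" "l < n" "z = zs ! k" "w = zs ! l"
    using zs(2) by (metis in_set_conv_nth)
  then show ?thesis using not_two_roots_near_shift[OF zs] assms(3,4) by blast
qed

lemma near_node_root_unique:
  assumes "root z" "root w" "near_node n a c z i" "near_node n a c w i"
  shows "z = w"
proof -
  obtain zs :: "complex list"
    where zs: "of_int_poly (f_poly n a c) = (\<Prod>z\<leftarrow>zs. [:- z, 1:])" "length zs = n"
    by (rule roots_list_exists)
  have "z \<in> set zs" "w \<in> set zs" using assms(1,2) root_iff_in_roots_list[OF zs] by blast+
  then obtain k l where "k < n" "l < n" "z = zs ! k" "w = zs ! l"
    using zs(2) by (metis in_set_conv_nth)
  then show ?thesis using not_two_roots_near_node[OF zs] assms(3,4) by blast
qed

end

section \<open>Counting shifts with isomorphic fields\<close>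

lemma near_node_diff_le:
  assumes z: "near_node n a c z i" and w: "near_node n a c' w i" and n: "n \<ge> 1"
    and A: "0 \<le> A" "A \<le> \<bar>real_of_int c\<bar>" "A \<le> \<bar>real_of_int c'\<bar>"
  shows "cmod (z - w) * A \<le> 2 ^ n"
proof -
  have "cmod (z - of_int (a i)) * A \<le> cmod (z - of_int (a i)) * \<bar>real_of_int c\<bar>"
    "cmod (w - of_int (a i)) * A \<le> cmod (w - of_int (a i)) * \<bar>real_of_int c'\<bar>"
    using A by (simp_all add: mult_left_mono)
  then have "cmod (z - of_int (a i)) * A \<le> 2 ^ (n - 1)" "cmod (w - of_int (a i)) * A \<le> 2 ^ (n - 1)"
    using z w unfolding near_node_def by linarith+
  moreover have "cmod (z - w) * A \<le> (cmod (z - of_int (a i)) + cmod (w - of_int (a i))) * A"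
    using norm_triangle_ineq4[of "z - of_int (a i)" "w - of_int (a i)"] A(1) by (intro mult_right_mono) auto
  moreover have "(2::real) ^ n = 2 ^ (n - 1) + 2 ^ (n - 1)" using n by (cases n) auto
  ultimately show ?thesis by (simp add: distrib_right)
qed

definition fst_other :: "nat \<Rightarrow> nat" where
  "fst_other j = (if j = 0 then 1 else 0)"

definition snd_other :: "nat \<Rightarrow> nat" where
  "snd_other j = (if j \<le> 1 then 2 else 1)"

lemma other_indices: "fst_other j \<noteq> j" "snd_other j \<noteq> j" "fst_other j \<noteq> snd_other j"
  "fst_other j < 3" "snd_other j < 3"
  unfolding fst_other_def snd_other_def by auto

text \<open>In the application \<open>r c k = E\<^sub>c(\<theta>\<^sub>k)\<close>, which makes the products in \<open>norm_Ints\<close> norms.\<close>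
locale conjugate_roots =
  fixes n :: nat and a :: "nat \<Rightarrow> int" and A :: real and S :: "int set"
    and r :: "int \<Rightarrow> nat \<Rightarrow> complex"
  assumes n3: "n \<ge> 3" and inj: "inj_on a {..<n-1}"
    and A: "shift_bound n (node_sum n a) \<le> A"
    and S: "\<And>c. c \<in> S \<Longrightarrow> A \<le> \<bar>real_of_int c\<bar> \<and> \<bar>real_of_int c\<bar> \<le> 2 * A"
    and roots: "\<And>c k. c \<in> S \<Longrightarrow> k < n \<Longrightarrow> poly (of_int_poly (f_poly n a c)) (r c k) = 0"
    and distinct: "\<And>c. c \<in> S \<Longrightarrow> inj_on (r c) {..<n}"
    and norm_Ints: "\<And>c c'. c \<in> S \<Longrightarrow> c' \<in> S \<Longrightarrow> (\<Prod>k<n. r c k - r c' k) \<in> \<int>"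
begin

abbreviation "M \<equiv> node_sum n a"

lemma large_shift: "c \<in> S \<Longrightarrow> large_shift n a c"
  using n3 inj A S[of c] by unfold_locales auto

lemma A_ge: "12 \<le> A" "6 * 4 ^ n * (2 * M + 1) ^ (n - 3) < A"
  using shift_bound_le_imp[OF node_sum_nonneg A] by simp_all

definition shift_index :: "int \<Rightarrow> nat" where
  "shift_index c = (SOME j. j < n \<and> (\<forall>k<n. near_shift n c (r c k) \<longrightarrow> k = j))"

lemma shift_index:
  assumes "c \<in> S"
  shows "shift_index c < n" "\<And>k. k < n \<Longrightarrow> near_shift n c (r c k) \<Longrightarrow> k = shift_index c"
proof -
  have "\<exists>j. j < n \<and> (\<forall>k<n. near_shift n c (r c k) \<longrightarrow> k = j)"
  proof (cases "\<exists>j<n. near_shift n c (r c j)")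
    case True
    then obtain j where j: "j < n" "near_shift n c (r c j)" by blast
    have "k = j" if "k < n" "near_shift n c (r c k)" for k
      using large_shift.near_shift_root_unique[OF large_shift[OF assms] roots[OF assms that(1)]
          roots[OF assms j(1)] that(2) j(2)] distinct[OF assms] that(1) j(1)
      unfolding inj_on_def by blast
    with j show ?thesis by blast
  next
    case False
    then show ?thesis using n3 by (intro exI[of _ 0]) auto
  qed
  then have "shift_index c < n \<and> (\<forall>k<n. near_shift n c (r c k) \<longrightarrow> k = shift_index c)"
    unfolding shift_index_def by (rule someI_ex)
  then show "shift_index c < n" "\<And>k. k < n \<Longrightarrow> near_shift n c (r c k) \<Longrightarrow> k = shift_index c" by auto
qed

definition node_index :: "int \<Rightarrow> nat \<Rightarrow> nat" where
  "node_index c k = (SOME i. near_node n a c (r c k) i)"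

lemma node_index:
  assumes "c \<in> S" "k < n" "k \<noteq> shift_index c"
  shows "near_node n a c (r c k) (node_index c k)"
proof -
  have "\<exists>i. near_node n a c (r c k) i"
    using large_shift.root_cases[OF large_shift[OF assms(1)] roots[OF assms(1,2)]]
      shift_index(2)[OF assms(1,2)] assms(3) by blast
  then show ?thesis unfolding node_index_def by (rule someI_ex)
qed

lemma node_index_inj:
  assumes "c \<in> S" "k < n" "l < n" "k \<noteq> shift_index c" "l \<noteq> shift_index c" "k \<noteq> l"
  shows "node_index c k \<noteq> node_index c l"
proof
  assume "node_index c k = node_index c l"
  then have "r c k = r c l"
    using large_shift.near_node_root_unique[OF large_shift[OF assms(1)] roots[OF assms(1,2)]
        roots[OF assms(1,3)]] node_index[OF assms(1,2,4)] node_index[OF assms(1,3,5)] by simp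
  with distinct[OF assms(1)] assms(2,3,6) show False unfolding inj_on_def by blast
qed

definition signature :: "int \<Rightarrow> nat \<times> nat \<times> nat" where
  "signature c = (shift_index c, node_index c (fst_other (shift_index c)),
     node_index c (snd_other (shift_index c)))"

lemma others_near_node:
  assumes "c \<in> S"
  shows "near_node n a c (r c (fst_other (shift_index c))) (node_index c (fst_other (shift_index c)))"
    "near_node n a c (r c (snd_other (shift_index c))) (node_index c (snd_other (shift_index c)))"
  using node_index[OF assms] other_indices[of "shift_index c"] n3 by auto

lemma signature_in:
  assumes "c \<in> S"
  shows "signature c \<in> {..<n} \<times> (SIGMA i:{..<n-1}. {..<n-1} - {i})"
proof -
  have "node_index c (fst_other (shift_index c)) \<noteq> node_index c (snd_other (shift_index c))"
    using node_index_inj[OF assms] other_indices[of "shift_index c"] n3 by auto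
  then show ?thesis
    using shift_index(1)[OF assms] others_near_node[OF assms] unfolding signature_def near_node_def by auto
qed

lemma norm_prod_diff_ge_1:
  assumes c: "c \<in> S" and c': "c' \<in> S" and ne: "c \<noteq> c'"
  shows "1 \<le> (\<Prod>k<n. cmod (r c k - r c' k))"
proof -
  obtain m where m: "(\<Prod>k<n. r c k - r c' k) = of_int m"
    using norm_Ints[OF c c'] by (elim Ints_cases)
  have "r c k - r c' k \<noteq> 0" if "k < n" for k
    using f_poly_no_common_root[OF roots[OF c that] ne] roots[OF c' that] by auto
  then have "(\<Prod>k<n. r c k - r c' k) \<noteq> 0" by simp
  then have "m \<noteq> 0" using m by simp
  then have "1 \<le> cmod (of_int m :: complex)" by simp
  then show ?thesis unfolding m[symmetric] prod_norm .
qed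

lemma norm_diff_le_of_not_shift_index:
  assumes c: "c \<in> S" and c': "c' \<in> S" and k: "k < n" "k \<noteq> shift_index c" "k \<noteq> shift_index c'"
  shows "cmod (r c k - r c' k) \<le> 2 * M + 1"
  using norm_triangle_ineq4[of "r c k" "r c' k"]
    large_shift.norm_near_node_le[OF large_shift[OF c] node_index[OF c k(1,2)]]
    large_shift.norm_near_node_le[OF large_shift[OF c'] node_index[OF c' k(1,3)]] by linarith

lemma norm_diff_roots_le:
  assumes c: "c \<in> S" and c': "c' \<in> S" and k: "k < n"
  shows "cmod (r c k - r c' k) \<le> 4 * A + 2"
  using norm_triangle_ineq4[of "r c k" "r c' k"] S[OF c] S[OF c']
    large_shift.norm_root_le[OF large_shift[OF c] roots[OF c k]]
    large_shift.norm_root_le[OF large_shift[OF c'] roots[OF c' k]] by linarith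

lemma norm_prod_diff_le_of_same_signature:
  assumes c: "c \<in> S" and c': "c' \<in> S" and eq: "signature c = signature c'"
  shows "A * A * (\<Prod>k<n. cmod (r c k - r c' k)) \<le> A * (5 * (4 ^ n * (2 * M + 1) ^ (n - 3)))"
proof -
  define j where "j = shift_index c"
  define k1 k2 where "k1 = fst_other j" and "k2 = snd_other j"
  define x where "x = (\<lambda>k. cmod (r c k - r c' k))"
  have j': "shift_index c' = j" using eq unfolding signature_def j_def by simp
  then have nodes: "node_index c' k1 = node_index c k1" "node_index c' k2 = node_index c k2"
    using eq unfolding signature_def j_def k1_def k2_def by simp_all
  have idx: "j < n" "k1 < n" "k2 < n" "k1 \<noteq> j" "k2 \<noteq> j" "k1 \<noteq> k2"
    using shift_index(1)[OF c] other_indices[of j] n3 unfolding j_def k1_def k2_def by auto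
  have xk: "x k * A \<le> 2 ^ n" if "k \<in> {k1, k2}" for k
  proof -
    have "near_node n a c (r c k) (node_index c k)" "near_node n a c' (r c' k) (node_index c k)"
      using others_near_node[OF c] others_near_node[OF c'] j' nodes that unfolding j_def k1_def k2_def
      by auto
    then show ?thesis unfolding x_def
      by (rule near_node_diff_le) (use n3 A_ge S[OF c] S[OF c'] in auto)
  qed
  define P where "P = (\<Prod>k\<in>{..<n} - {j} - {k1, k2}. x k)"
  have P: "P \<le> (2 * M + 1) ^ (n - 3)" unfolding P_def
  proof (rule prod_le_power)
    show "0 \<le> x k \<and> x k \<le> 2 * M + 1" if "k \<in> {..<n} - {j} - {k1, k2}" for k
      using norm_diff_le_of_not_shift_index[OF c c', of k] that j' unfolding x_def j_def by auto
    show "card ({..<n} - {j} - {k1, k2}) \<le> n - 3" using idx by (simp add: card_Diff_subset)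
  qed (use node_sum_nonneg in simp)
  have "(\<Prod>k<n. x k) = x j * (\<Prod>k\<in>{..<n} - {j}. x k)" using idx by (subst prod.remove[of _ j]) auto
  also have "(\<Prod>k\<in>{..<n} - {j}. x k) = x k1 * x k2 * P"
    unfolding P_def using idx by (intro prod_remove_two) auto
  finally have "A * A * (\<Prod>k<n. x k) = x j * (x k1 * A) * (x k2 * A) * P" by (simp add: mult_ac)
  also have "\<dots> \<le> (4 * A + 2) * 2 ^ n * 2 ^ n * (2 * M + 1) ^ (n - 3)"
    using norm_diff_roots_le[OF c c' idx(1)] xk P A_ge node_sum_nonneg
    by (intro mult_mono) (auto simp: x_def P_def prod_nonneg)
  also have "\<dots> = (4 * A + 2) * (4 ^ n * (2 * M + 1) ^ (n - 3))"
    by (simp add: mult_ac flip: power_mult_distrib)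
  also have "\<dots> \<le> (5 * A) * (4 ^ n * (2 * M + 1) ^ (n - 3))"
    using A_ge(1) node_sum_nonneg by (intro mult_right_mono) auto
  finally show ?thesis unfolding x_def by simp
qed

text \<open>Two shifts with the same signature would give a nonzero integer norm
  \<open>\<Prod>\<^sub>k (r c k - r c' k)\<close> of absolute value less than \<open>1\<close>.\<close>
lemma signature_inj: "inj_on signature S"
proof (rule inj_onI, rule ccontr)
  fix c c' assume c: "c \<in> S" and c': "c' \<in> S" and eq: "signature c = signature c'" and ne: "c \<noteq> c'"
  have "A * A \<le> A * A * (\<Prod>k<n. cmod (r c k - r c' k))"
    using mult_left_mono[OF norm_prod_diff_ge_1[OF c c' ne], of "A * A"] by simp
  also have "\<dots> \<le> A * (5 * (4 ^ n * (2 * M + 1) ^ (n - 3)))"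
    by (rule norm_prod_diff_le_of_same_signature[OF c c' eq])
  finally have "A \<le> 5 * (4 ^ n * (2 * M + 1) ^ (n - 3))"
    by (rule mult_left_le_imp_le) (use A_ge in linarith)
  moreover have "6 * (4 ^ n * (2 * M + 1) ^ (n - 3)) < A" using A_ge(2) by (simp add: mult.assoc)
  moreover have "0 \<le> 4 ^ n * (2 * M + 1) ^ (n - 3)" using node_sum_nonneg by simp
  ultimately show False by linarith
qed

lemma card_le: "card S \<le> n * (n - 1) * (n - 2)"
proof -
  have "signature ` S \<subseteq> {..<n} \<times> (SIGMA i:{..<n-1}. {..<n-1} - {i})"
    using signature_in by blast
  then have "card S \<le> card ({..<n} \<times> (SIGMA i:{..<n-1}. {..<n-1} - {i}))"
    by (rule card_inj_on_le[OF signature_inj]) simp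
  also have "\<dots> = n * (n - 1) * (n - 2)"
    by (simp add: card_cartesian_product card_Diff_subset numeral_2_eq_2)
  finally show ?thesis .
qed

end

lemma prod_rpoly_diff_in_Ints:
  fixes F E E' :: "rat poly" and \<theta> :: "nat \<Rightarrow> 'a::field_char_0"
  assumes F: "F \<noteq> 0" "degree F = n" "\<And>k. k < n \<Longrightarrow> rpoly F (\<theta> k) = 0" and inj: "inj_on \<theta> {..<n}"
    and int: "\<And>k. k < n \<Longrightarrow> algebraic_int (rpoly E (\<theta> k))" "\<And>k. k < n \<Longrightarrow> algebraic_int (rpoly E' (\<theta> k))"
  shows "(\<Prod>k<n. rpoly E (\<theta> k) - rpoly E' (\<theta> k)) \<in> \<int>"
proof (rule rational_algebraic_int_is_int)
  show "algebraic_int (\<Prod>k<n. rpoly E (\<theta> k) - rpoly E' (\<theta> k))"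
    using int by (intro algebraic_int_prod algebraic_int_diff) auto
  show "(\<Prod>k<n. rpoly E (\<theta> k) - rpoly E' (\<theta> k)) \<in> \<rat>"
    using prod_rpoly_roots_in_Rats[OF F inj, of "E - E'"] by simp
qed

lemma conjugate_embeddings:
  fixes \<xi> :: "int \<Rightarrow> complex" and \<theta> :: "nat \<Rightarrow> complex"
  assumes n: "n \<ge> 1" and inj: "inj_on a {..<n-1}" and b: "b \<in> S"
    and S: "\<And>c. c \<in> S \<Longrightarrow> c \<notin> a ` {..<n-1} \<and> poly (of_int_poly (f_poly n a c)) (\<xi> c) = 0
              \<and> fields_iso (gen_field (\<xi> c)) K"
    and \<theta>: "\<And>k. k < n \<Longrightarrow> poly (of_int_poly (f_poly n a b)) (\<theta> k) = 0" "inj_on \<theta> {..<n}"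
  shows "\<exists>E. (\<forall>c\<in>S. \<forall>k<n. poly (of_int_poly (f_poly n a c)) (rpoly (E c) (\<theta> k)) = 0) \<and>
    (\<forall>c\<in>S. inj_on (\<lambda>k. rpoly (E c) (\<theta> k)) {..<n})"
proof -
  define F :: "int \<Rightarrow> rat poly" where "F c = of_int_poly (f_poly n a c)" for c
  have F: "monic (F c)" "irreducible (F c)" "rpoly (F c) (\<xi> c) = 0" if "c \<in> S" for c
    using monic_f_poly_rat[OF n] irreducible_f_poly[OF n inj] S[OF that]
    unfolding F_def by (simp_all add: rpoly_of_int_poly)
  have "\<exists>E R. rpoly (F c) (rpoly E (\<xi> b)) = 0 \<and> rpoly R (rpoly E (\<xi> b)) = \<xi> b" if c: "c \<in> S" for c
  proof -
    have iso: "fields_iso (gen_field (\<xi> c)) K" "fields_iso (gen_field (\<xi> b)) K"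
      using S[OF c] S[OF b] by simp_all
    obtain E R where "rpoly (F c) (rpoly E (\<xi> b)) = 0" "rpoly R (rpoly E (\<xi> b)) = \<xi> b"
      using gen_field_iso_transfer[OF F[OF c] F[OF b] iso] .
    then show ?thesis by blast
  qed
  then have "\<forall>c\<in>S. \<exists>E R. rpoly (F c) (rpoly E (\<xi> b)) = 0 \<and> rpoly R (rpoly E (\<xi> b)) = \<xi> b" by blast
  from bchoice[OF this] obtain E
    where "\<forall>c\<in>S. \<exists>R. rpoly (F c) (rpoly (E c) (\<xi> b)) = 0 \<and> rpoly R (rpoly (E c) (\<xi> b)) = \<xi> b" ..
  from bchoice[OF this] obtain R
    where ER: "\<forall>c\<in>S. rpoly (F c) (rpoly (E c) (\<xi> b)) = 0 \<and> rpoly (R c) (rpoly (E c) (\<xi> b)) = \<xi> b" ..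
  have conj: "rpoly (F c) (rpoly (E c) (\<theta> k)) = 0" "rpoly (R c) (rpoly (E c) (\<theta> k)) = \<theta> k"
    if "c \<in> S" "k < n" for c k
    using rpoly_embedding_conjugate[OF F[OF b], of "\<theta> k" "F c" "E c" "R c"] ER that \<theta>(1)[OF that(2)]
    unfolding F_def by (simp_all add: rpoly_of_int_poly)
  have "poly (of_int_poly (f_poly n a c)) (rpoly (E c) (\<theta> k)) = 0" if "c \<in> S" "k < n" for c k
    using conj(1)[OF that] unfolding F_def rpoly_of_int_poly .
  moreover have "inj_on (\<lambda>k. rpoly (E c) (\<theta> k)) {..<n}" if "c \<in> S" for c
  proof (rule inj_onI)
    fix k l assume kl: "k \<in> {..<n}" "l \<in> {..<n}" and "rpoly (E c) (\<theta> k) = rpoly (E c) (\<theta> l)"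
    then have "\<theta> k = \<theta> l" using conj(2)[OF that] by (metis lessThan_iff)
    with \<theta>(2) kl show "k = l" by (simp add: inj_on_eq_iff)
  qed
  ultimately show ?thesis by blast
qed

lemma card_iso_class_le:
  fixes \<xi> :: "int \<Rightarrow> complex"
  assumes n3: "n \<ge> 3" and inj: "inj_on a {..<n-1}" and A: "shift_bound n (node_sum n a) \<le> A"
    and S: "\<And>c. c \<in> S \<Longrightarrow> A \<le> \<bar>real_of_int c\<bar> \<and> \<bar>real_of_int c\<bar> \<le> 2 * A \<and> c \<notin> a ` {..<n-1}
              \<and> poly (of_int_poly (f_poly n a c)) (\<xi> c) = 0 \<and> fields_iso (gen_field (\<xi> c)) K"
  shows "card S \<le> n * (n - 1) * (n - 2)"
proof (cases "S = {}")
  case False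
  then obtain b where b: "b \<in> S" by blast
  have n: "n \<ge> 1" using n3 by simp
  have "large_shift n a b" using n3 inj A S[OF b] by unfold_locales auto
  then obtain \<theta> :: "nat \<Rightarrow> complex"
    where roots_b: "\<forall>k<n. poly (of_int_poly (f_poly n a b)) (\<theta> k) = 0" "inj_on \<theta> {..<n}"
    by (rule large_shift.roots_enumeration)
  have "c \<notin> a ` {..<n-1} \<and> poly (of_int_poly (f_poly n a c)) (\<xi> c) = 0 \<and> fields_iso (gen_field (\<xi> c)) K"
    if "c \<in> S" for c
    using S[OF that] by blast
  from conjugate_embeddings[OF n inj b this roots_b(1)[rule_format] roots_b(2)] obtain E
    where E: "\<forall>c\<in>S. \<forall>k<n. poly (of_int_poly (f_poly n a c)) (rpoly (E c) (\<theta> k)) = 0"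
      "\<forall>c\<in>S. inj_on (\<lambda>k. rpoly (E c) (\<theta> k)) {..<n}"
    by blast
  interpret conjugate_roots n a A S "\<lambda>c k. rpoly (E c) (\<theta> k)"
  proof
    fix c c' assume c: "c \<in> S" and c': "c' \<in> S"
    show "A \<le> \<bar>real_of_int c\<bar> \<and> \<bar>real_of_int c\<bar> \<le> 2 * A" using S[OF c] by blast
    show "poly (of_int_poly (f_poly n a c)) (rpoly (E c) (\<theta> k)) = 0" if "k < n" for k
      using E(1) c that by blast
    show "inj_on (\<lambda>k. rpoly (E c) (\<theta> k)) {..<n}" using E(2) c by blast
    show "(\<Prod>k<n. rpoly (E c) (\<theta> k) - rpoly (E c') (\<theta> k)) \<in> \<int>"
    proof (rule prod_rpoly_diff_in_Ints[of "of_int_poly (f_poly n a b)"])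
      show "of_int_poly (f_poly n a b) \<noteq> (0 :: rat poly)" "degree (of_int_poly (f_poly n a b) :: rat poly) = n"
        using monic_f_poly_rat[OF n, of a b] by auto
      show "rpoly (of_int_poly (f_poly n a b)) (\<theta> k) = 0" if "k < n" for k
        using roots_b(1) that by (simp add: rpoly_of_int_poly)
      show "algebraic_int (rpoly (E c) (\<theta> k))" "algebraic_int (rpoly (E c') (\<theta> k))" if "k < n" for k
        using algebraic_int_f_poly_root[OF n] E(1) c c' that by blast+
    qed (rule roots_b(2))
  qed (use n3 inj A in simp_all)
  show ?thesis by (rule card_le)
qed simp

theorem proposition4p2:
  fixes n :: nat and a :: "nat \<Rightarrow> int"
  assumes "n \<ge> 3" and "inj_on a {..<n-1}"
  shows "\<exists>A1::int. \<forall>A \<ge> A1. \<forall>(S::int set) (\<xi>::int \<Rightarrow> complex).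
           (\<forall>c\<in>S. A \<le> \<bar>c\<bar> \<and> \<bar>c\<bar> \<le> 2 * A \<and> c \<notin> a ` {..<n-1}
                  \<and> poly (map_poly of_int (f_poly n a c)) (\<xi> c) = 0) \<and>
           (\<exists>K::complex set. \<forall>c\<in>S. fields_iso (gen_field (\<xi> c)) K)
           \<longrightarrow> card S \<le> n * (n-1) * (n-2)"
proof (intro exI[of _ "\<lceil>shift_bound n (node_sum n a)\<rceil>"] allI impI, elim conjE exE)
  fix A :: int and S :: "int set" and \<xi> :: "int \<Rightarrow> complex" and K
  assume A: "\<lceil>shift_bound n (node_sum n a)\<rceil> \<le> A"
    and S: "\<forall>c\<in>S. A \<le> \<bar>c\<bar> \<and> \<bar>c\<bar> \<le> 2 * A \<and> c \<notin> a ` {..<n-1}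
                  \<and> poly (map_poly of_int (f_poly n a c)) (\<xi> c) = 0"
    and K: "\<forall>c\<in>S. fields_iso (gen_field (\<xi> c)) K"
  show "card S \<le> n * (n-1) * (n-2)"
  proof (rule card_iso_class_le[OF assms, of "real_of_int A"])
    show "shift_bound n (node_sum n a) \<le> real_of_int A" using A by linarith
    fix c assume "c \<in> S"
    then have "A \<le> \<bar>c\<bar>" "\<bar>c\<bar> \<le> 2 * A" using S by auto
    then have "real_of_int A \<le> real_of_int \<bar>c\<bar>" "real_of_int \<bar>c\<bar> \<le> real_of_int (2 * A)"
      by (simp_all only: of_int_le_iff)
    then show "real_of_int A \<le> \<bar>real_of_int c\<bar> \<and> \<bar>real_of_int c\<bar> \<le> 2 * real_of_int A \<and> c \<notin> a ` {..<n-1}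
        \<and> poly (of_int_poly (f_poly n a c)) (\<xi> c) = 0 \<and> fields_iso (gen_field (\<xi> c)) K"
      using S K \<open>c \<in> S\<close> by simp
  qed
qed

end
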